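(* Let $\mathcal{G}$ and $\mathcal{F}$ be quantum isomorphic quantum graphs. Then for every $r\geq1$ the quantum graphs $\mu_{r-1}(\mathcal{G})$ and $\mu_{r-1}(\mathcal{F})$ are quantum isomorphic.
   Context: Quantum graph $\mathcal{G}=(C(\mathcal{G}),\psi_{\mathcal{G}},A_{\mathcal{G}})$: $C(\mathcal{G})$ finite-dimensional C*-algebra, $\psi_{\mathcal{G}}$ a faithful state with $mm^*=\delta_{\mathcal{G}}^2\mathrm{id}$ on the GNS space $L^2(\mathcal{G})$ ($m$ the multiplication, $\delta_{\mathcal{G}}>0$), $A_{\mathcal{G}}$ self-adjoint on $L^2(\mathcal{G})$ with $m(A\otimes A)m^*=A$ and $A=(\mathrm{id}\otimes\eta^*m)(\mathrm{id}\otimes A\otimes\mathrm{id})(m^*\eta\otimes\mathrm{id})$, $\eta$ the unit map. Quantum isomorphism: choosing orthonormal bases $\{e_j\}$ of $L^2(\mathcal{G})$, $\{f_i\}$ of $L^2(\mathcal{F})$, $\mathcal{G}$ and $\mathcal{F}$ are quantum isomorphic iff the universal $*$-algebra generated by entries $p_{ij}$ of a unitary matrix subject to relations making $e_j\mapsto\sum_i f_i\otimes p_{ij}$ a unital $*$-homomorphism $C(\mathcal{G})\to C(\mathcal{F})\otimes(\cdot)$ with $\rho A_{\mathcal{G}}=(A_{\mathcal{F}}\otimes\mathrm{id})\rho$ is non-zero. Quantum Mycielskian of order $r-1$ ($r\ge2$): $C(\mu_{r-1}(\mathcal{G}))=\mathbb{C}\oplus\bigoplus_{k=1}^rC(\mathcal{G})$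 with state $\psi(\lambda,x_1,\dots,x_r)=\frac{1}{1+r\delta_{\mathcal{G}}^2}\bigl(\lambda+\delta_{\mathcal{G}}^2\sum_k\psi_{\mathcal{G}}(x_k)\bigr)$ and adjacency operator $A(\lambda,x_1,\dots,x_r)=(y_0,y_1,\dots,y_r)$ where $y_0=\delta_{\mathcal{G}}^2\psi_{\mathcal{G}}(x_r)$, $y_1=A_{\mathcal{G}}(x_1+x_2)$, $y_k=A_{\mathcal{G}}(x_{k-1}+x_{k+1})$ for $2\le k\le r-1$, $y_r=\lambda\mathbf{1}+A_{\mathcal{G}}x_{r-1}$ (for $r=2$: $y_1=A_{\mathcal{G}}(x_1+x_2)$, $y_2=\lambda\mathbf 1+A_{\mathcal{G}}x_1$). For $r=1$, $\mu_0(\mathcal{G})=\mathcal{G}$. *)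

theory Defs
  imports Complex_Main
begin

text \<open>A quantum graph G = (C(G), psi, A) is presented through an orthonormal basis
  e_0, ..., e_(N-1) of its GNS space L^2(G) (inner product given by psi(x^* y)).
  Elements of C(G) = L^2(G) are coordinate vectors (nat => complex), zero at indices >= N.
  Data: e_i e_j = sum_k qmul i j k e_k;  e_i^* = sum_k qstar i k e_k (the involution is
  conjugate linear);  1 = sum_k qunit k e_k;  qstate k = psi(e_k);  A e_j = sum_i qadj i j e_i;
  qdelta is the constant delta with m m^* = delta^2 id.\<close>

record qgraph =
  qdim   :: nat
  qmul   :: "nat \<Rightarrow> nat \<Rightarrow> nat \<Rightarrow> complex"
  qstar  :: "nat \<Rightarrow> nat \<Rightarrow> complex"
  qunit  :: "nat \<Rightarrow> complex"
  qstate :: "nat \<Rightarrow> complex"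
  qdelta :: real
  qadj   :: "nat \<Rightarrow> nat \<Rightarrow> complex"

definition vecs :: "nat \<Rightarrow> (nat \<Rightarrow> complex) set" where
  "vecs N = {x. \<forall>k\<ge>N. x k = 0}"

definition vadd :: "nat \<Rightarrow> (nat \<Rightarrow> complex) \<Rightarrow> (nat \<Rightarrow> complex) \<Rightarrow> (nat \<Rightarrow> complex)" where
  "vadd N x y = (\<lambda>k. if k < N then x k + y k else 0)"

definition vscale :: "nat \<Rightarrow> complex \<Rightarrow> (nat \<Rightarrow> complex) \<Rightarrow> (nat \<Rightarrow> complex)" where
  "vscale N c x = (\<lambda>k. if k < N then c * x k else 0)"

definition vmul :: "qgraph \<Rightarrow> (nat \<Rightarrow> complex) \<Rightarrow> (nat \<Rightarrow> complex) \<Rightarrow> (nat \<Rightarrow> complex)" where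
  "vmul G x y = (\<lambda>k. if k < qdim G then
      (\<Sum>i<qdim G. \<Sum>j<qdim G. x i * y j * qmul G i j k) else 0)"

definition vstar :: "qgraph \<Rightarrow> (nat \<Rightarrow> complex) \<Rightarrow> (nat \<Rightarrow> complex)" where
  "vstar G x = (\<lambda>k. if k < qdim G then (\<Sum>i<qdim G. cnj (x i) * qstar G i k) else 0)"

definition vone :: "qgraph \<Rightarrow> (nat \<Rightarrow> complex)" where
  "vone G = (\<lambda>k. if k < qdim G then qunit G k else 0)"

definition vpsi :: "qgraph \<Rightarrow> (nat \<Rightarrow> complex) \<Rightarrow> complex" where
  "vpsi G x = (\<Sum>k<qdim G. x k * qstate G k)"

definition vinner :: "nat \<Rightarrow> (nat \<Rightarrow> complex) \<Rightarrow> (nat \<Rightarrow> complex) \<Rightarrow> complex" where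
  "vinner N x y = (\<Sum>k<N. cnj (x k) * y k)"

definition is_fd_cstar_algebra :: "qgraph \<Rightarrow> bool" where
  "is_fd_cstar_algebra G \<longleftrightarrow>
     (let N = qdim G; V = vecs N in
      vone G \<in> V \<and>
      (\<forall>x\<in>V. \<forall>y\<in>V. \<forall>z\<in>V. vmul G (vmul G x y) z = vmul G x (vmul G y z)) \<and>
      (\<forall>x\<in>V. vmul G (vone G) x = x \<and> vmul G x (vone G) = x) \<and>
      (\<forall>x\<in>V. vstar G (vstar G x) = x) \<and>
      (\<forall>x\<in>V. \<forall>y\<in>V. vstar G (vmul G x y) = vmul G (vstar G y) (vstar G x)) \<and>
      (\<exists>nrm :: (nat \<Rightarrow> complex) \<Rightarrow> real.
         (\<forall>x\<in>V. nrm x \<ge> 0 \<and> (nrm x = 0 \<longleftrightarrow> x = (\<lambda>_. 0))) \<and>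
         (\<forall>x\<in>V. \<forall>c. nrm (vscale N c x) = cmod c * nrm x) \<and>
         (\<forall>x\<in>V. \<forall>y\<in>V. nrm (vadd N x y) \<le> nrm x + nrm y) \<and>
         (\<forall>x\<in>V. \<forall>y\<in>V. nrm (vmul G x y) \<le> nrm x * nrm y) \<and>
         (\<forall>x\<in>V. nrm (vmul G (vstar G x) x) = (nrm x)\<^sup>2)))"

text \<open>psi is a state on C(G) whose GNS inner product psi(x^* y) is the standard inner
  product of the coordinates, i.e. the chosen basis is orthonormal in L^2(G)
  (this also makes psi positive and faithful).\<close>
definition is_gns_state :: "qgraph \<Rightarrow> bool" where
  "is_gns_state G \<longleftrightarrow>
     vpsi G (vone G) = 1 \<and>
     (\<forall>x\<in>vecs (qdim G). \<forall>y\<in>vecs (qdim G).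
        vpsi G (vmul G (vstar G x) y) = vinner (qdim G) x y)"

text \<open>m m^* = delta^2 id, written in the orthonormal basis:
  m m^* e_k = sum_{i,j} cnj(c_{ijk}) sum_l c_{ijl} e_l.\<close>
definition is_delta_form :: "qgraph \<Rightarrow> bool" where
  "is_delta_form G \<longleftrightarrow> qdelta G > 0 \<and>
     (\<forall>k<qdim G. \<forall>l<qdim G.
        (\<Sum>i<qdim G. \<Sum>j<qdim G. qmul G i j l * cnj (qmul G i j k))
          = complex_of_real ((qdelta G)\<^sup>2) * (if k = l then 1 else 0))"

text \<open>Adjacency operator axioms, in the orthonormal basis:
  A self-adjoint;  m (A \<otimes> A) m^* = A;
  A = (id \<otimes> eta^* m)(id \<otimes> A \<otimes> id)(m^* eta \<otimes> id).\<close>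
definition is_qadjacency :: "qgraph \<Rightarrow> bool" where
  "is_qadjacency G \<longleftrightarrow> (let N = qdim G; c = qmul G; a = qadj G; u = qunit G in
     (\<forall>i<N. \<forall>j<N. a i j = cnj (a j i)) \<and>
     (\<forall>k<N. \<forall>l<N.
        (\<Sum>i<N. \<Sum>j<N. \<Sum>p<N. \<Sum>q<N. cnj (c i j k) * a p i * a q j * c p q l) = a l k) \<and>
     (\<forall>i<N. \<forall>t<N.
        (\<Sum>k<N. \<Sum>j<N. \<Sum>q<N. \<Sum>l<N. u k * cnj (c i j k) * a q j * c q t l * cnj (u l))
          = a i t))"

definition is_qgraph :: "qgraph \<Rightarrow> bool" where
  "is_qgraph G \<longleftrightarrow> is_fd_cstar_algebra G \<and> is_gns_state G \<and> is_delta_form G \<and> is_qadjacency G"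

text \<open>Generators (i, j, False) = p_ij and (i, j, True) = p_ij^*.  Elements of the free
  *-algebra are (finitely supported) coefficient functions on words.\<close>
type_synonym gen = "nat \<times> nat \<times> bool"
type_synonym fa = "gen list \<Rightarrow> complex"

definition fa_zero :: fa where "fa_zero = (\<lambda>_. 0)"
definition fa_one :: fa where "fa_one = (\<lambda>w. if w = [] then 1 else 0)"
definition fa_gen :: "gen \<Rightarrow> fa" where "fa_gen g = (\<lambda>w. if w = [g] then 1 else 0)"
definition fa_add :: "fa \<Rightarrow> fa \<Rightarrow> fa" where "fa_add f g = (\<lambda>w. f w + g w)"
definition fa_sub :: "fa \<Rightarrow> fa \<Rightarrow> fa" where "fa_sub f g = (\<lambda>w. f w - g w)"
definition fa_smul :: "complex \<Rightarrow> fa \<Rightarrow> fa" where "fa_smul c f = (\<lambda>w. c * f w)"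
definition fa_sum :: "('i \<Rightarrow> fa) \<Rightarrow> 'i set \<Rightarrow> fa" where
  "fa_sum F A = (\<lambda>w. \<Sum>a\<in>A. F a w)"
definition fa_mul :: "fa \<Rightarrow> fa \<Rightarrow> fa" where
  "fa_mul f g = (\<lambda>w. \<Sum>k\<le>length w. f (take k w) * g (drop k w))"
definition gen_flip :: "gen \<Rightarrow> gen" where "gen_flip g = (case g of (i, j, b) \<Rightarrow> (i, j, \<not> b))"
definition fa_star :: "fa \<Rightarrow> fa" where
  "fa_star f = (\<lambda>w. cnj (f (rev (map gen_flip w))))"
definition fa_finite :: "fa \<Rightarrow> bool" where "fa_finite f \<longleftrightarrow> finite {w. f w \<noteq> 0}"

abbreviation fa_p :: "nat \<Rightarrow> nat \<Rightarrow> fa" where "fa_p i j \<equiv> fa_gen (i, j, False)"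
abbreviation fa_pstar :: "nat \<Rightarrow> nat \<Rightarrow> fa" where "fa_pstar i j \<equiv> fa_gen (i, j, True)"

inductive_set star_ideal :: "fa set \<Rightarrow> fa set" for R where
  rel: "r \<in> R \<Longrightarrow> r \<in> star_ideal R"
| rel_star: "r \<in> R \<Longrightarrow> fa_star r \<in> star_ideal R"
| zero: "fa_zero \<in> star_ideal R"
| add: "x \<in> star_ideal R \<Longrightarrow> y \<in> star_ideal R \<Longrightarrow> fa_add x y \<in> star_ideal R"
| mult: "x \<in> star_ideal R \<Longrightarrow> fa_finite a \<Longrightarrow> fa_finite b \<Longrightarrow>
           fa_mul (fa_mul a x) b \<in> star_ideal R"

definition kdelta :: "nat \<Rightarrow> nat \<Rightarrow> complex" where
  "kdelta i j = (if i = j then 1 else 0)"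

text \<open>Relations (written as lhs - rhs) on p_ij (i < dim F, j < dim G) saying that
  P = (p_ij) is unitary, that rho(e_j) = sum_i f_i \<otimes> p_ij defines a unital
  *-homomorphism C(G) -> C(F) \<otimes> B, and that rho A_G = (A_F \<otimes> id) rho.\<close>
definition qiso_rels :: "qgraph \<Rightarrow> qgraph \<Rightarrow> fa set" where
  "qiso_rels G F = (let NG = qdim G; NF = qdim F in
     {fa_sub (fa_sum (\<lambda>k. fa_smul (qmul G a b k) (fa_p l k)) {..<NG})
             (fa_sum (\<lambda>(i, i'). fa_smul (qmul F i i' l) (fa_mul (fa_p i a) (fa_p i' b)))
                     ({..<NF} \<times> {..<NF}))
       | a b l. a < NG \<and> b < NG \<and> l < NF}
   \<union> {fa_sub (fa_sum (\<lambda>j. fa_smul (qunit G j) (fa_p l j)) {..<NG}) (fa_smul (qunit F l) fa_one)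
       | l. l < NF}
   \<union> {fa_sub (fa_sum (\<lambda>k. fa_smul (qstar G a k) (fa_p l k)) {..<NG})
             (fa_sum (\<lambda>i. fa_smul (qstar F i l) (fa_pstar i a)) {..<NF})
       | a l. a < NG \<and> l < NF}
   \<union> {fa_sub (fa_sum (\<lambda>k. fa_smul (qadj G k j) (fa_p l k)) {..<NG})
             (fa_sum (\<lambda>i. fa_smul (qadj F l i) (fa_p i j)) {..<NF})
       | j l. j < NG \<and> l < NF}
   \<union> {fa_sub (fa_sum (\<lambda>j. fa_mul (fa_p i j) (fa_pstar k j)) {..<NG}) (fa_smul (kdelta i k) fa_one)
       | i k. i < NF \<and> k < NF}
   \<union> {fa_sub (fa_sum (\<lambda>i. fa_mul (fa_pstar i j) (fa_p i k)) {..<NF}) (fa_smul (kdelta j k) fa_one)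
       | j k. j < NG \<and> k < NG})"

text \<open>Quantum isomorphism: the universal *-algebra (free *-algebra modulo the *-ideal
  generated by the relations) is non-zero, i.e. 1 is not in that ideal.\<close>
definition quantum_iso :: "qgraph \<Rightarrow> qgraph \<Rightarrow> bool" where
  "quantum_iso G F \<longleftrightarrow> fa_one \<notin> star_ideal (qiso_rels G F)"

text \<open>mycielskian r G is mu_(r-1)(G) (r copies of C(G)).  For r >= 2 we use the
  orthonormal basis of L^2(mu_(r-1)(G)) with c = sqrt(1 + r delta^2):
  index 0: E_0 = c (1, 0, ..., 0);
  index 1 + (s-1) N + j (1 <= s <= r, j < N): E_(s,j) = (c / delta) e_j placed in copy s.
  For r = 1 (and, by convention, r = 0) it is G itself.\<close>

definition myc_slot :: "nat \<Rightarrow> nat \<Rightarrow> nat" where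
  "myc_slot N t = (t - 1) div N + 1"
definition myc_pos :: "nat \<Rightarrow> nat \<Rightarrow> nat" where
  "myc_pos N t = (t - 1) mod N"

text \<open>feeds r s s': copy s contributes to y_(s') in the adjacency operator.\<close>
definition myc_feeds :: "nat \<Rightarrow> nat \<Rightarrow> nat \<Rightarrow> bool" where
  "myc_feeds r s s' \<longleftrightarrow>
     (s' = 1 \<and> (s = 1 \<or> s = 2)) \<or>
     (2 \<le> s' \<and> s' \<le> r - 1 \<and> (s = s' - 1 \<or> s = s' + 1)) \<or>
     (s' = r \<and> s = r - 1)"

definition mycielskian :: "nat \<Rightarrow> qgraph \<Rightarrow> qgraph" where
  "mycielskian r G = (if r \<le> 1 then G else
    (let N = qdim G; d = qdelta G; c = sqrt (1 + real r * d\<^sup>2);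
         sl = myc_slot N; ps = myc_pos N in
     \<lparr> qdim = 1 + r * N,
       qmul = (\<lambda>t1 t2 t3.
          if t1 = 0 \<and> t2 = 0 \<and> t3 = 0 then complex_of_real c
          else if 1 \<le> t1 \<and> 1 \<le> t2 \<and> 1 \<le> t3 \<and> sl t1 = sl t2 \<and> sl t2 = sl t3
            then complex_of_real (c / d) * qmul G (ps t1) (ps t2) (ps t3)
          else 0),
       qstar = (\<lambda>t1 t2.
          if t1 = 0 \<and> t2 = 0 then 1
          else if 1 \<le> t1 \<and> 1 \<le> t2 \<and> sl t1 = sl t2 then qstar G (ps t1) (ps t2)
          else 0),
       qunit = (\<lambda>t. if t = 0 then complex_of_real (1 / c)
                    else complex_of_real (d / c) * qunit G (ps t)),
       qstate = (\<lambda>t. if t = 0 then complex_of_real (1 / c)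
                    else complex_of_real (d / c) * qstate G (ps t)),
       qdelta = c,
       qadj = (\<lambda>t1 t2.
          if t1 = 0 \<and> t2 = 0 then 0
          else if t1 = 0 then (if sl t2 = r then complex_of_real d * qstate G (ps t2) else 0)
          else if t2 = 0 then (if sl t1 = r then complex_of_real d * qunit G (ps t1) else 0)
          else if myc_feeds r (sl t2) (sl t1) then qadj G (ps t1) (ps t2)
          else 0) \<rparr>))"

end

theory Submission
  imports Defs
begin

(* Sending the generators of the
  Mycielskian problem to the entries of the block matrix P' = 1 \<oplus> (I_r \<otimes> P) defines a
  *-homomorphism between the free *-algebras which maps every defining relation for
  mu_(r-1)(G), mu_(r-1)(F) into the ideal of relations for G, F: relations between different
  copies of C(G) vanish, relations inside one copy are scalar multiples of relations for P, and
  those linking the extra summand to the last copy hold because a quantum isomorphism preserves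
  the unit, the state psi and (through m m^* = delta^2 id) the constant delta. So 1 cannot lie
  in the first ideal without lying in the second. *)

section \<open>The free *-algebra as a ring\<close>

lemma fa_mul_assoc: "fa_mul (fa_mul f g) h = fa_mul f (fa_mul g h)"
proof
  fix w :: "gen list"
  let ?n = "length w"
  define F where "F m j = f (take m w) * g (take j (drop m w)) * h (drop (m + j) w)" for m j
  have "fa_mul (fa_mul f g) h w = (\<Sum>k\<le>?n. \<Sum>m\<le>k. F m (k - m))"
    unfolding fa_mul_def F_def
    by (auto simp: sum_distrib_right min_def drop_take intro!: sum.cong)
  also have "\<dots> = (\<Sum>(m, j)\<in>{(m, j). m + j \<le> ?n}. F m j)"
    by (rule sum.triangle_reindex_eq[symmetric])
  also have "{(m, j). m + j \<le> ?n} = Sigma {..?n} (\<lambda>m. {..?n - m})" by auto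
  also have "(\<Sum>(m, j)\<in>Sigma {..?n} (\<lambda>m. {..?n - m}). F m j) = (\<Sum>m\<le>?n. \<Sum>j\<le>?n - m. F m j)"
    by (rule sum.Sigma[symmetric]) auto
  also have "\<dots> = fa_mul f (fa_mul g h) w"
    unfolding fa_mul_def F_def
    by (auto simp: sum_distrib_left mult.assoc add.commute intro!: sum.cong)
  finally show "fa_mul (fa_mul f g) h w = fa_mul f (fa_mul g h) w" .
qed

lemma fa_one_mul: "fa_mul fa_one g = g"
proof
  fix w :: "gen list"
  have "fa_mul fa_one g w = (\<Sum>k\<le>length w. if k = 0 then g w else 0)"
    unfolding fa_mul_def fa_one_def by (intro sum.cong) auto
  then show "fa_mul fa_one g w = g w" by simp
qed

lemma fa_mul_one: "fa_mul g fa_one = g"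
proof
  fix w :: "gen list"
  have "fa_mul g fa_one w = (\<Sum>k\<le>length w. if k = length w then g w else 0)"
    unfolding fa_mul_def fa_one_def by (intro sum.cong) auto
  then show "fa_mul g fa_one w = g w" by simp
qed

lemma fa_mul_add_left: "fa_mul (fa_add f g) h = fa_add (fa_mul f h) (fa_mul g h)"
  by (auto simp: fa_mul_def fa_add_def distrib_right sum.distrib)

lemma fa_mul_add_right: "fa_mul h (fa_add f g) = fa_add (fa_mul h f) (fa_mul h g)"
  by (auto simp: fa_mul_def fa_add_def distrib_left sum.distrib)

lemma fa_finite_mul:
  assumes "fa_finite f" "fa_finite g"
  shows "fa_finite (fa_mul f g)"
proof -
  have "{w. fa_mul f g w \<noteq> 0} \<subseteq> (\<lambda>(u, v). u @ v) ` ({u. f u \<noteq> 0} \<times> {v. g v \<noteq> 0})"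
  proof
    fix w assume "w \<in> {w. fa_mul f g w \<noteq> 0}"
    then obtain k where "f (take k w) * g (drop k w) \<noteq> 0"
      unfolding fa_mul_def by (auto elim: sum.not_neutral_contains_not_neutral)
    then show "w \<in> (\<lambda>(u, v). u @ v) ` ({u. f u \<noteq> 0} \<times> {v. g v \<noteq> 0})"
      by (intro image_eqI[of _ _ "(take k w, drop k w)"]) auto
  qed
  moreover have "finite ((\<lambda>(u, v). u @ v) ` ({u. f u \<noteq> 0} \<times> {v. g v \<noteq> 0}))"
    using assms unfolding fa_finite_def by auto
  ultimately show ?thesis unfolding fa_finite_def by (rule finite_subset)
qed

definition rev_flip :: "gen list \<Rightarrow> gen list" where
  "rev_flip w = rev (map gen_flip w)"

lemma gen_flip_flip [simp]: "gen_flip (gen_flip g) = g"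
  by (cases g) (auto simp: gen_flip_def)

lemma rev_flip_rev_flip [simp]: "rev_flip (rev_flip w) = w"
  by (simp add: rev_flip_def rev_map comp_def)

lemma rev_flip_eq_iff: "rev_flip w = v \<longleftrightarrow> w = rev_flip v"
  by (metis rev_flip_rev_flip)

lemma fa_star_eq: "fa_star f w = cnj (f (rev_flip w))"
  by (simp add: fa_star_def rev_flip_def)

lemma fa_star_star: "fa_star (fa_star f) = f"
  by (simp add: fa_star_eq fun_eq_iff)

lemma fa_star_mul: "fa_star (fa_mul f g) = fa_mul (fa_star g) (fa_star f)"
proof
  fix w :: "gen list"
  let ?n = "length w" and ?v = "rev_flip w"
  have take: "rev_flip (take k w) = drop (?n - k) ?v" for k
    by (cases "k \<le> ?n") (auto simp: rev_flip_def drop_rev take_map)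
  have drop: "rev_flip (drop k w) = take (?n - k) ?v" for k
    by (cases "k \<le> ?n") (auto simp: rev_flip_def take_rev drop_map)
  have "fa_mul (fa_star g) (fa_star f) w
      = (\<Sum>k\<le>?n. cnj (g (drop (?n - k) ?v)) * cnj (f (take (?n - k) ?v)))"
    unfolding fa_mul_def fa_star_eq take drop by simp
  also have "\<dots> = (\<Sum>k\<le>?n. cnj (g (drop k ?v)) * cnj (f (take k ?v)))"
    by (rule sum.reindex_bij_witness[where i="\<lambda>k. ?n - k" and j="\<lambda>k. ?n - k"])
      (auto simp: rev_flip_def)
  also have "\<dots> = fa_star (fa_mul f g) w"
    unfolding fa_mul_def fa_star_eq by (simp add: mult.commute rev_flip_def)
  finally show "fa_star (fa_mul f g) w = fa_mul (fa_star g) (fa_star f) w" ..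
qed

lemma fa_star_add: "fa_star (fa_add f g) = fa_add (fa_star f) (fa_star g)"
  by (auto simp: fa_star_def fa_add_def)

lemma fa_star_zero: "fa_star fa_zero = fa_zero"
  by (auto simp: fa_star_def fa_zero_def)

lemma fa_finite_star:
  assumes "fa_finite f"
  shows "fa_finite (fa_star f)"
proof -
  have "{w. fa_star f w \<noteq> 0} = rev_flip ` {w. f w \<noteq> 0}"
    by (auto simp: fa_star_eq image_iff) (metis rev_flip_rev_flip)
  then show ?thesis using assms by (simp add: fa_finite_def)
qed

lemma star_ideal_closed_star: "x \<in> star_ideal R \<Longrightarrow> fa_star x \<in> star_ideal R"
proof (induction rule: star_ideal.induct)
  case (rel r) then show ?case by (rule star_ideal.rel_star)
next
  case (rel_star r) then show ?case by (simp add: fa_star_star star_ideal.rel)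
next
  case zero then show ?case by (simp add: fa_star_zero star_ideal.zero)
next
  case (add x y) then show ?case by (simp add: fa_star_add star_ideal.add)
next
  case (mult x a b) then show ?case
    by (simp add: fa_star_mul fa_mul_assoc[symmetric] star_ideal.mult fa_finite_star)
qed

typedef ncpoly = "{f :: fa. fa_finite f}" morphisms nc_coeff Abs_ncpoly
  by (rule exI[of _ fa_zero]) (simp add: fa_finite_def fa_zero_def)

setup_lifting type_definition_ncpoly

lemma fa_finite_nc_coeff: "fa_finite (nc_coeff x)"
  using nc_coeff by auto

instantiation ncpoly :: ring_1
begin

lift_definition zero_ncpoly :: ncpoly is fa_zero
  by (simp add: fa_finite_def fa_zero_def)

lift_definition one_ncpoly :: ncpoly is fa_one
  by (simp add: fa_finite_def fa_one_def)

lift_definition plus_ncpoly :: "ncpoly \<Rightarrow> ncpoly \<Rightarrow> ncpoly" is fa_add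
proof -
  fix f g assume "fa_finite f" "fa_finite g"
  then show "fa_finite (fa_add f g)" unfolding fa_finite_def fa_add_def
    by (rule finite_subset[rotated, OF finite_UnI]) auto
qed

lift_definition uminus_ncpoly :: "ncpoly \<Rightarrow> ncpoly" is "\<lambda>f w. - f w"
  by (simp add: fa_finite_def)

lift_definition minus_ncpoly :: "ncpoly \<Rightarrow> ncpoly \<Rightarrow> ncpoly" is fa_sub
proof -
  fix f g assume "fa_finite f" "fa_finite g"
  then show "fa_finite (fa_sub f g)" unfolding fa_finite_def fa_sub_def
    by (rule finite_subset[rotated, OF finite_UnI]) auto
qed

lift_definition times_ncpoly :: "ncpoly \<Rightarrow> ncpoly \<Rightarrow> ncpoly" is fa_mul
  by (rule fa_finite_mul)

instance
proof
  fix a b c :: ncpoly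
  show "a + b + c = a + (b + c)" by transfer (auto simp: fa_add_def)
  show "a + b = b + a" by transfer (auto simp: fa_add_def)
  show "0 + a = a" by transfer (auto simp: fa_add_def fa_zero_def)
  show "- a + a = 0" by transfer (auto simp: fa_add_def fa_zero_def)
  show "a - b = a + - b" by transfer (auto simp: fa_add_def fa_sub_def)
  show "a * b * c = a * (b * c)" by transfer (rule fa_mul_assoc)
  show "(a + b) * c = a * c + b * c" by transfer (rule fa_mul_add_left)
  show "a * (b + c) = a * b + a * c" by transfer (rule fa_mul_add_right)
  show "1 * a = a" by transfer (rule fa_one_mul)
  show "a * 1 = a" by transfer (rule fa_mul_one)
  show "(0::ncpoly) \<noteq> 1" by transfer (auto simp: fa_zero_def fa_one_def fun_eq_iff)
qed

end

lemma nc_coeff_add: "nc_coeff (x + y) = fa_add (nc_coeff x) (nc_coeff y)"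
  by transfer simp

lemma nc_coeff_diff: "nc_coeff (x - y) = fa_sub (nc_coeff x) (nc_coeff y)"
  by transfer simp

lemma nc_coeff_mult: "nc_coeff (x * y) = fa_mul (nc_coeff x) (nc_coeff y)"
  by transfer simp

lemma nc_coeff_one: "nc_coeff 1 = fa_one"
  by transfer simp

lemma nc_coeff_zero: "nc_coeff 0 = fa_zero"
  by transfer simp

lemma nc_coeff_add_apply: "nc_coeff (x + y) w = nc_coeff x w + nc_coeff y w"
  by (simp add: nc_coeff_add fa_add_def)

lemma nc_coeff_zero_apply [simp]: "nc_coeff 0 w = 0"
  by (simp add: nc_coeff_zero fa_zero_def)

lemma nc_coeff_sum: "finite A \<Longrightarrow> nc_coeff (sum F A) = fa_sum (\<lambda>a. nc_coeff (F a)) A"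
  by (induction A rule: finite_induct) (auto simp: nc_coeff_add_apply fa_sum_def)

lemma ncpoly_eqI: "(\<And>w. nc_coeff x w = nc_coeff y w) \<Longrightarrow> x = y"
  by (metis ext nc_coeff_inject)

lemma Abs_ncpoly_fa_zero: "Abs_ncpoly fa_zero = 0"
  by (metis nc_coeff_zero nc_coeff_inverse)

lift_definition nc_const :: "complex \<Rightarrow> ncpoly" is "\<lambda>c w. if w = [] then c else 0"
  by (auto simp: fa_finite_def intro: finite_subset[of _ "{[]}"])

lemma nc_coeff_const: "nc_coeff (nc_const c) = fa_smul c fa_one"
  by transfer (auto simp: fa_smul_def fa_one_def)

lemma nc_coeff_const_mult: "nc_coeff (nc_const c * x) = fa_smul c (nc_coeff x)"
proof transfer
  fix c :: complex and f :: fa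
  show "fa_mul (\<lambda>w. if w = [] then c else 0) f = fa_smul c f"
  proof
    fix w
    have "fa_mul (\<lambda>w. if w = [] then c else 0) f w = (\<Sum>k\<le>length w. if k = 0 then c * f w else 0)"
      unfolding fa_mul_def by (intro sum.cong) auto
    then show "fa_mul (\<lambda>w. if w = [] then c else 0) f w = fa_smul c f w"
      by (simp add: fa_smul_def)
  qed
qed

lemma nc_coeff_const_mult_apply: "nc_coeff (nc_const c * x) w = c * nc_coeff x w"
  by (simp add: nc_coeff_const_mult fa_smul_def)

lemma nc_const_mult: "nc_const (a * b) = nc_const a * nc_const b"
  by (rule ncpoly_eqI) (simp add: nc_coeff_const_mult_apply nc_coeff_const fa_smul_def)

lemma nc_const_add: "nc_const (a + b) = nc_const a + nc_const b"
  by transfer (auto simp: fa_add_def)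

lemma nc_const_zero [simp]: "nc_const 0 = 0"
  by transfer (auto simp: fa_zero_def)

lemma nc_const_one [simp]: "nc_const 1 = 1"
  by transfer (auto simp: fa_one_def)

lemma nc_const_diff: "nc_const (a - b) = nc_const a - nc_const b"
  by transfer (auto simp: fa_sub_def)

lemma nc_const_sum: "nc_const (sum f A) = (\<Sum>a\<in>A. nc_const (f a))"
  by (induction A rule: infinite_finite_induct) (auto simp: nc_const_add)

lemma nc_const_commute: "nc_const c * x = x * nc_const c"
proof (rule ncpoly_eqI)
  fix w
  have "nc_coeff (x * nc_const c) w = (\<Sum>k\<le>length w. if k = length w then c * nc_coeff x w else 0)"
    unfolding nc_coeff_mult nc_coeff_const fa_mul_def
    by (intro sum.cong) (auto simp: fa_smul_def fa_one_def)
  then show "nc_coeff (nc_const c * x) w = nc_coeff (x * nc_const c) w"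
    by (simp add: nc_coeff_const_mult_apply)
qed

lemma nc_const_mult_mult: "(nc_const a * x) * (nc_const b * y) = nc_const (a * b) * (x * y)"
proof -
  have "(nc_const a * x) * (nc_const b * y) = nc_const a * ((x * nc_const b) * y)"
    by (simp only: mult.assoc)
  also have "\<dots> = nc_const a * (nc_const b * x * y)"
    by (simp only: nc_const_commute)
  also have "\<dots> = nc_const (a * b) * (x * y)"
    by (simp only: nc_const_mult mult.assoc)
  finally show ?thesis .
qed

lift_definition nc_star :: "ncpoly \<Rightarrow> ncpoly" is fa_star
  by (rule fa_finite_star)

lemma nc_coeff_star: "nc_coeff (nc_star x) = fa_star (nc_coeff x)"
  by transfer simp

lemma nc_star_mult: "nc_star (x * y) = nc_star y * nc_star x"
  by transfer (rule fa_star_mul)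

lemma nc_star_add: "nc_star (x + y) = nc_star x + nc_star y"
  by transfer (rule fa_star_add)

lemma nc_star_zero [simp]: "nc_star 0 = 0"
  by transfer (rule fa_star_zero)

lemma nc_star_const: "nc_star (nc_const c) = nc_const (cnj c)"
  by transfer (auto simp: fa_star_def fun_eq_iff)

lemma nc_star_one [simp]: "nc_star 1 = 1"
  using nc_star_const[of 1] by simp

lemma nc_star_sum: "nc_star (sum f A) = (\<Sum>a\<in>A. nc_star (f a))"
  by (induction A rule: infinite_finite_induct) (auto simp: nc_star_add)

lemma nc_star_uminus: "nc_star (- x) = - nc_star x"
proof -
  have "nc_star (- x) + nc_star x = 0"
    by (simp add: nc_star_add[symmetric])
  then show ?thesis by (simp add: eq_neg_iff_add_eq_0)
qed

lemma nc_star_diff: "nc_star (x - y) = nc_star x - nc_star y"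
  by (simp only: diff_conv_add_uminus nc_star_add nc_star_uminus)

lift_definition nc_var :: "gen \<Rightarrow> ncpoly" is fa_gen
  by (simp add: fa_finite_def fa_gen_def)

lemma nc_coeff_var: "nc_coeff (nc_var g) = fa_gen g"
  by transfer simp

lemma nc_star_var: "nc_star (nc_var g) = nc_var (gen_flip g)"
proof (rule ncpoly_eqI)
  fix w
  have "rev_flip w = [g] \<longleftrightarrow> w = [gen_flip g]"
    by (auto simp: rev_flip_eq_iff rev_flip_def)
  then show "nc_coeff (nc_star (nc_var g)) w = nc_coeff (nc_var (gen_flip g)) w"
    by (simp add: nc_coeff_star nc_coeff_var fa_star_eq fa_gen_def)
qed

lift_definition nc_word :: "gen list \<Rightarrow> ncpoly" is "\<lambda>w v. if v = w then 1 else 0"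
  by (simp add: fa_finite_def)

lemma nc_coeff_word: "nc_coeff (nc_word u) w = (if w = u then 1 else 0)"
  by transfer simp

lemma nc_word_append: "nc_word (u @ v) = nc_word u * nc_word v"
proof (rule ncpoly_eqI)
  fix w :: "gen list"
  have "nc_coeff (nc_word u * nc_word v) w
      = (\<Sum>k\<le>length w. if k = length u \<and> w = u @ v then 1 else 0)"
    unfolding nc_coeff_mult fa_mul_def nc_coeff_word[abs_def]
  proof (rule sum.cong[OF refl])
    fix k assume "k \<in> {..length w}"
    then have "(take k w = u \<and> drop k w = v) \<longleftrightarrow> (k = length u \<and> w = u @ v)"
      using append_take_drop_id[of k w] by auto
    then show "(if take k w = u then 1 else 0) * (if drop k w = v then 1 else 0)
        = (if k = length u \<and> w = u @ v then 1 else (0::complex))" by auto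
  qed
  then show "nc_coeff (nc_word (u @ v)) w = nc_coeff (nc_word u * nc_word v) w"
    by (simp add: nc_coeff_word)
qed

lemma nc_word_Nil: "nc_word [] = 1"
  by transfer (auto simp: fa_one_def)

lemma nc_word_single: "nc_word [g] = nc_var g"
  by transfer (auto simp: fa_gen_def)

definition nc_supp :: "ncpoly \<Rightarrow> gen list set" where
  "nc_supp x = {w. nc_coeff x w \<noteq> 0}"

lemma finite_nc_supp: "finite (nc_supp x)"
  using fa_finite_nc_coeff[of x] by (simp add: nc_supp_def fa_finite_def)

lemma nc_coeff_const_mult_word: "nc_coeff (nc_const c * nc_word u) w = (if w = u then c else 0)"
  by (simp add: nc_coeff_const_mult_apply nc_coeff_word)

lemma ncpoly_expansion:
  assumes "finite S" "nc_supp x \<subseteq> S"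
  shows "x = (\<Sum>u\<in>S. nc_const (nc_coeff x u) * nc_word u)"
proof (rule ncpoly_eqI)
  fix w
  have "nc_coeff (\<Sum>u\<in>S. nc_const (nc_coeff x u) * nc_word u) w
      = (\<Sum>u\<in>S. if w = u then nc_coeff x u else 0)"
    using assms by (simp add: nc_coeff_sum fa_sum_def nc_coeff_const_mult_word)
  also have "\<dots> = nc_coeff x w"
    using assms by (auto simp: nc_supp_def)
  finally show "nc_coeff x w = nc_coeff (\<Sum>u\<in>S. nc_const (nc_coeff x u) * nc_word u) w" ..
qed

section \<open>Ideals and evaluation homomorphisms\<close>

definition nc_ideal :: "fa set \<Rightarrow> ncpoly set" where
  "nc_ideal R = {x. nc_coeff x \<in> star_ideal R}"

lemma nc_ideal_zero [simp]: "0 \<in> nc_ideal R"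
  by (simp add: nc_ideal_def nc_coeff_zero star_ideal.zero)

lemma nc_ideal_add: "x \<in> nc_ideal R \<Longrightarrow> y \<in> nc_ideal R \<Longrightarrow> x + y \<in> nc_ideal R"
  by (simp add: nc_ideal_def nc_coeff_add star_ideal.add)

lemma nc_ideal_mult: "x \<in> nc_ideal R \<Longrightarrow> a * x * b \<in> nc_ideal R"
  by (simp add: nc_ideal_def nc_coeff_mult star_ideal.mult fa_finite_nc_coeff)

lemma nc_ideal_mult_left: "x \<in> nc_ideal R \<Longrightarrow> a * x \<in> nc_ideal R"
  using nc_ideal_mult[of x R a 1] by simp

lemma nc_ideal_mult_right: "x \<in> nc_ideal R \<Longrightarrow> x * b \<in> nc_ideal R"
  using nc_ideal_mult[of x R 1 b] by simp

lemma nc_ideal_uminus: "x \<in> nc_ideal R \<Longrightarrow> - x \<in> nc_ideal R"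
  using nc_ideal_mult_left[of x R "- 1"] by simp

lemma nc_ideal_star: "x \<in> nc_ideal R \<Longrightarrow> nc_star x \<in> nc_ideal R"
  by (simp add: nc_ideal_def nc_coeff_star star_ideal_closed_star)

lemma nc_ideal_rel: "nc_coeff x \<in> R \<Longrightarrow> x \<in> nc_ideal R"
  by (simp add: nc_ideal_def star_ideal.rel)

lemma one_in_nc_ideal_iff: "1 \<in> nc_ideal R \<longleftrightarrow> fa_one \<in> star_ideal R"
  by (simp add: nc_ideal_def nc_coeff_one)

lemma quantum_iso_iff: "quantum_iso G F \<longleftrightarrow> 1 \<notin> nc_ideal (qiso_rels G F)"
  by (simp add: quantum_iso_def one_in_nc_ideal_iff)

lemma nc_ideal_const_iff: "nc_const c \<in> nc_ideal R \<longleftrightarrow> c = 0 \<or> 1 \<in> nc_ideal R"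
proof
  assume c: "nc_const c \<in> nc_ideal R"
  show "c = 0 \<or> 1 \<in> nc_ideal R"
  proof (cases "c = 0")
    case False
    have "nc_const (1 / c) * nc_const c \<in> nc_ideal R"
      using c by (rule nc_ideal_mult_left)
    with False show ?thesis by (simp add: nc_const_mult[symmetric])
  qed simp
next
  show "c = 0 \<or> 1 \<in> nc_ideal R \<Longrightarrow> nc_const c \<in> nc_ideal R"
    using nc_ideal_mult_left[of 1 R "nc_const c"] by auto
qed

definition nc_cong :: "fa set \<Rightarrow> ncpoly \<Rightarrow> ncpoly \<Rightarrow> bool" where
  "nc_cong R x y \<longleftrightarrow> x - y \<in> nc_ideal R"

lemma nc_cong_refl [simp]: "nc_cong R x x"
  by (simp add: nc_cong_def)

lemma nc_cong_sym: "nc_cong R x y \<Longrightarrow> nc_cong R y x"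
  unfolding nc_cong_def using nc_ideal_uminus by fastforce

lemma nc_cong_trans [trans]: "nc_cong R x y \<Longrightarrow> nc_cong R y z \<Longrightarrow> nc_cong R x z"
  unfolding nc_cong_def using nc_ideal_add by fastforce

lemma nc_cong_add: "nc_cong R x x' \<Longrightarrow> nc_cong R y y' \<Longrightarrow> nc_cong R (x + y) (x' + y')"
  unfolding nc_cong_def using nc_ideal_add[of "x - x'" R "y - y'"] by (simp add: algebra_simps)

lemma nc_cong_mult_left: "nc_cong R y y' \<Longrightarrow> nc_cong R (x * y) (x * y')"
  unfolding nc_cong_def using nc_ideal_mult_left[of "y - y'" R x] by (simp add: algebra_simps)

lemma nc_cong_mult_right: "nc_cong R x x' \<Longrightarrow> nc_cong R (x * y) (x' * y)"
  unfolding nc_cong_def using nc_ideal_mult_right[of "x - x'" R y] by (simp add: algebra_simps)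

lemma nc_cong_mult: "nc_cong R x x' \<Longrightarrow> nc_cong R y y' \<Longrightarrow> nc_cong R (x * y) (x' * y')"
  by (meson nc_cong_mult_left nc_cong_mult_right nc_cong_trans)

lemma nc_cong_sum:
  "(\<And>a. a \<in> A \<Longrightarrow> nc_cong R (F a) (G a)) \<Longrightarrow> nc_cong R (sum F A) (sum G A)"
  by (induction A rule: infinite_finite_induct) (auto simp: nc_cong_add)

lemma nc_cong_star: "nc_cong R x y \<Longrightarrow> nc_cong R (nc_star x) (nc_star y)"
  unfolding nc_cong_def using nc_ideal_star by (fastforce simp: nc_star_diff[symmetric])

definition nc_eval_word :: "(gen \<Rightarrow> 'a::monoid_mult) \<Rightarrow> gen list \<Rightarrow> 'a" where
  "nc_eval_word \<phi> w = prod_list (map \<phi> w)"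

definition nc_eval :: "(gen \<Rightarrow> ncpoly) \<Rightarrow> ncpoly \<Rightarrow> ncpoly" where
  "nc_eval \<phi> x = (\<Sum>u\<in>nc_supp x. nc_const (nc_coeff x u) * nc_eval_word \<phi> u)"

lemma nc_eval_expansion:
  assumes "finite S" "nc_supp x \<subseteq> S"
  shows "nc_eval \<phi> x = (\<Sum>u\<in>S. nc_const (nc_coeff x u) * nc_eval_word \<phi> u)"
  unfolding nc_eval_def
  by (rule sum.mono_neutral_left) (use assms in \<open>auto simp: nc_supp_def\<close>)

lemma nc_eval_add: "nc_eval \<phi> (x + y) = nc_eval \<phi> x + nc_eval \<phi> y"
proof -
  let ?S = "nc_supp x \<union> nc_supp y"
  have S: "finite ?S" by (simp add: finite_nc_supp)
  have "nc_eval \<phi> (x + y) = (\<Sum>u\<in>?S. nc_const (nc_coeff x u + nc_coeff y u) * nc_eval_word \<phi> u)"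
    by (subst nc_eval_expansion[OF S]) (auto simp: nc_supp_def nc_coeff_add_apply)
  also have "\<dots> = (\<Sum>u\<in>?S. nc_const (nc_coeff x u) * nc_eval_word \<phi> u)
      + (\<Sum>u\<in>?S. nc_const (nc_coeff y u) * nc_eval_word \<phi> u)"
    by (simp add: nc_const_add distrib_right sum.distrib)
  also have "\<dots> = nc_eval \<phi> x + nc_eval \<phi> y"
    using S by (simp add: nc_eval_expansion[symmetric])
  finally show ?thesis .
qed

lemma nc_eval_zero [simp]: "nc_eval \<phi> 0 = 0"
  by (simp add: nc_eval_def nc_supp_def)

lemma nc_eval_sum: "nc_eval \<phi> (sum F A) = (\<Sum>a\<in>A. nc_eval \<phi> (F a))"
  by (induction A rule: infinite_finite_induct) (auto simp: nc_eval_add)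

lemma nc_eval_uminus: "nc_eval \<phi> (- x) = - nc_eval \<phi> x"
proof -
  have "nc_eval \<phi> (- x) + nc_eval \<phi> x = 0"
    by (simp add: nc_eval_add[symmetric])
  then show ?thesis by (simp add: eq_neg_iff_add_eq_0)
qed

lemma nc_eval_diff: "nc_eval \<phi> (x - y) = nc_eval \<phi> x - nc_eval \<phi> y"
  by (simp only: diff_conv_add_uminus nc_eval_add nc_eval_uminus)

lemma nc_eval_const_mult: "nc_eval \<phi> (nc_const c * x) = nc_const c * nc_eval \<phi> x"
proof -
  have "nc_eval \<phi> (nc_const c * x) = (\<Sum>u\<in>nc_supp x. nc_const (c * nc_coeff x u) * nc_eval_word \<phi> u)"
    by (subst nc_eval_expansion[OF finite_nc_supp])
      (auto simp: nc_supp_def nc_coeff_const_mult_apply)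
  also have "\<dots> = nc_const c * nc_eval \<phi> x"
    by (simp add: nc_eval_def sum_distrib_left nc_const_mult mult.assoc)
  finally show ?thesis .
qed

lemma nc_eval_const_mult_word: "nc_eval \<phi> (nc_const c * nc_word u) = nc_const c * nc_eval_word \<phi> u"
  by (subst nc_eval_expansion[of "{u}"]) (auto simp: nc_supp_def nc_coeff_const_mult_word)

lemma nc_eval_mult: "nc_eval \<phi> (x * y) = nc_eval \<phi> x * nc_eval \<phi> y"
proof -
  let ?A = "nc_supp x" and ?B = "nc_supp y"
  have "x * y = (\<Sum>u\<in>?A. nc_const (nc_coeff x u) * nc_word u)
      * (\<Sum>v\<in>?B. nc_const (nc_coeff y v) * nc_word v)"
    by (simp only: ncpoly_expansion[OF finite_nc_supp order_refl, symmetric])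
  also have "\<dots> = (\<Sum>u\<in>?A. \<Sum>v\<in>?B. nc_const (nc_coeff x u * nc_coeff y v) * nc_word (u @ v))"
    by (simp only: sum_product nc_word_append nc_const_mult_mult)
  finally have "nc_eval \<phi> (x * y)
      = (\<Sum>u\<in>?A. \<Sum>v\<in>?B. nc_const (nc_coeff x u * nc_coeff y v) * nc_eval_word \<phi> (u @ v))"
    by (simp add: nc_eval_sum nc_eval_const_mult_word)
  also have "\<dots> = (\<Sum>u\<in>?A. \<Sum>v\<in>?B. (nc_const (nc_coeff x u) * nc_eval_word \<phi> u)
      * (nc_const (nc_coeff y v) * nc_eval_word \<phi> v))"
    by (simp only: nc_eval_word_def map_append prod_list.append nc_const_mult_mult)
  also have "\<dots> = nc_eval \<phi> x * nc_eval \<phi> y"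
    by (simp only: nc_eval_def sum_product)
  finally show ?thesis .
qed

lemma nc_eval_one [simp]: "nc_eval \<phi> 1 = 1"
  using nc_eval_const_mult_word[of \<phi> 1 "[]"] by (simp add: nc_word_Nil nc_eval_word_def)

lemma nc_eval_var [simp]: "nc_eval \<phi> (nc_var g) = \<phi> g"
  using nc_eval_const_mult_word[of \<phi> 1 "[g]"] by (simp add: nc_word_single nc_eval_word_def)

lemma nc_eval_const [simp]: "nc_eval \<phi> (nc_const c) = nc_const c"
  using nc_eval_const_mult[of \<phi> c 1] by simp

lemma nc_star_prod_list: "nc_star (prod_list xs) = prod_list (rev (map nc_star xs))"
  by (induction xs) (auto simp: nc_star_mult nc_star_const[of 1, simplified])

lemma nc_eval_star:
  assumes \<phi>: "\<And>g. \<phi> (gen_flip g) = nc_star (\<phi> g)"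
  shows "nc_eval \<phi> (nc_star x) = nc_star (nc_eval \<phi> x)"
proof -
  have word: "nc_eval_word \<phi> (rev_flip u) = nc_star (nc_eval_word \<phi> u)" for u
    by (simp add: nc_eval_word_def rev_flip_def nc_star_prod_list rev_map comp_def \<phi>)
  have supp: "nc_supp (nc_star x) = rev_flip ` nc_supp x"
    by (auto simp: nc_supp_def nc_coeff_star fa_star_eq image_iff) (metis rev_flip_rev_flip)
  have "nc_eval \<phi> (nc_star x)
      = (\<Sum>u\<in>nc_supp x. nc_const (nc_coeff (nc_star x) (rev_flip u)) * nc_eval_word \<phi> (rev_flip u))"
    unfolding nc_eval_def supp
    by (rule sum.reindex[unfolded comp_def]) (metis inj_onI rev_flip_rev_flip)
  also have "\<dots> = (\<Sum>u\<in>nc_supp x. nc_star (nc_const (nc_coeff x u) * nc_eval_word \<phi> u))"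
    by (simp add: nc_coeff_star fa_star_eq word nc_star_mult nc_star_const nc_const_commute)
  also have "\<dots> = nc_star (nc_eval \<phi> x)"
    by (simp add: nc_eval_def nc_star_sum)
  finally show ?thesis .
qed

lemma nc_eval_maps_ideal:
  assumes \<phi>: "\<And>g. \<phi> (gen_flip g) = nc_star (\<phi> g)"
    and rels: "\<And>r. r \<in> R \<Longrightarrow> \<exists>x. r = nc_coeff x \<and> nc_eval \<phi> x \<in> nc_ideal R'"
    and x: "x \<in> nc_ideal R"
  shows "nc_eval \<phi> x \<in> nc_ideal R'"
proof -
  have "fa_finite f \<and> nc_eval \<phi> (Abs_ncpoly f) \<in> nc_ideal R'" if "f \<in> star_ideal R" for f
    using that
  proof (induction rule: star_ideal.induct)
    case (rel r)
    then obtain x where "r = nc_coeff x" "nc_eval \<phi> x \<in> nc_ideal R'"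
      using rels by blast
    then show ?case by (simp add: fa_finite_nc_coeff nc_coeff_inverse)
  next
    case (rel_star r)
    then obtain x where "r = nc_coeff x" "nc_eval \<phi> x \<in> nc_ideal R'"
      using rels by blast
    moreover have "fa_star (nc_coeff x) = nc_coeff (nc_star x)"
      by (simp add: nc_coeff_star)
    ultimately show ?case
      by (simp add: fa_finite_nc_coeff nc_coeff_inverse nc_eval_star[of \<phi>, OF \<phi>] nc_ideal_star)
  next
    case zero
    then show ?case by (simp add: Abs_ncpoly_fa_zero) (simp add: fa_finite_def fa_zero_def)
  next
    case (add f g)
    then have "fa_add f g = nc_coeff (Abs_ncpoly f + Abs_ncpoly g)"
      by (simp add: nc_coeff_add Abs_ncpoly_inverse)
    then show ?case
      using add by (simp add: fa_finite_nc_coeff nc_coeff_inverse nc_eval_add nc_ideal_add)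
  next
    case (mult f a b)
    then have "fa_mul (fa_mul a f) b = nc_coeff (Abs_ncpoly a * Abs_ncpoly f * Abs_ncpoly b)"
      by (simp add: nc_coeff_mult Abs_ncpoly_inverse)
    then show ?case
      using mult by (simp add: fa_finite_nc_coeff nc_coeff_inverse nc_eval_mult nc_ideal_mult)
  qed
  from this[of "nc_coeff x"] x show ?thesis
    by (simp add: nc_ideal_def nc_coeff_inverse)
qed

section \<open>The defining relations of a quantum isomorphism\<close>

definition pvar :: "nat \<Rightarrow> nat \<Rightarrow> ncpoly" where
  "pvar i j = nc_var (i, j, False)"

definition pvar_star :: "nat \<Rightarrow> nat \<Rightarrow> ncpoly" where
  "pvar_star i j = nc_var (i, j, True)"

lemma nc_star_pvar [simp]: "nc_star (pvar i j) = pvar_star i j"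
  by (simp add: pvar_def pvar_star_def nc_star_var gen_flip_def)

lemma nc_star_linear_comb:
  "nc_star (\<Sum>k\<in>A. nc_const (c k) * X k) = (\<Sum>k\<in>A. nc_const (cnj (c k)) * nc_star (X k))"
  by (simp add: nc_star_sum nc_star_mult nc_star_const nc_const_commute)

definition rel_mult :: "qgraph \<Rightarrow> qgraph \<Rightarrow> nat \<Rightarrow> nat \<Rightarrow> nat \<Rightarrow> ncpoly" where
  "rel_mult G F a b l =
     (\<Sum>k<qdim G. nc_const (qmul G a b k) * pvar l k)
   - (\<Sum>(i, i')\<in>{..<qdim F} \<times> {..<qdim F}. nc_const (qmul F i i' l) * (pvar i a * pvar i' b))"

definition rel_unit :: "qgraph \<Rightarrow> qgraph \<Rightarrow> nat \<Rightarrow> ncpoly" where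
  "rel_unit G F l = (\<Sum>j<qdim G. nc_const (qunit G j) * pvar l j) - nc_const (qunit F l)"

definition rel_star :: "qgraph \<Rightarrow> qgraph \<Rightarrow> nat \<Rightarrow> nat \<Rightarrow> ncpoly" where
  "rel_star G F a l =
     (\<Sum>k<qdim G. nc_const (qstar G a k) * pvar l k)
   - (\<Sum>i<qdim F. nc_const (qstar F i l) * pvar_star i a)"

definition rel_adj :: "qgraph \<Rightarrow> qgraph \<Rightarrow> nat \<Rightarrow> nat \<Rightarrow> ncpoly" where
  "rel_adj G F j l =
     (\<Sum>k<qdim G. nc_const (qadj G k j) * pvar l k)
   - (\<Sum>i<qdim F. nc_const (qadj F l i) * pvar i j)"

definition rel_unitary_row :: "qgraph \<Rightarrow> qgraph \<Rightarrow> nat \<Rightarrow> nat \<Rightarrow> ncpoly" where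
  "rel_unitary_row G F i k = (\<Sum>j<qdim G. pvar i j * pvar_star k j) - nc_const (kdelta i k)"

definition rel_unitary_col :: "qgraph \<Rightarrow> qgraph \<Rightarrow> nat \<Rightarrow> nat \<Rightarrow> ncpoly" where
  "rel_unitary_col G F j k = (\<Sum>i<qdim F. pvar_star i j * pvar i k) - nc_const (kdelta j k)"

definition qiso_rel_polys :: "qgraph \<Rightarrow> qgraph \<Rightarrow> ncpoly set" where
  "qiso_rel_polys G F =
     {rel_mult G F a b l | a b l. a < qdim G \<and> b < qdim G \<and> l < qdim F}
   \<union> {rel_unit G F l | l. l < qdim F}
   \<union> {rel_star G F a l | a l. a < qdim G \<and> l < qdim F}
   \<union> {rel_adj G F j l | j l. j < qdim G \<and> l < qdim F}
   \<union> {rel_unitary_row G F i k | i k. i < qdim F \<and> k < qdim F}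
   \<union> {rel_unitary_col G F j k | j k. j < qdim G \<and> k < qdim G}"

lemma qiso_rels_eq_image: "qiso_rels G F = nc_coeff ` qiso_rel_polys G F"
proof -
  note coeff = nc_coeff_diff nc_coeff_sum nc_coeff_const_mult split_def
  note coeff_var = nc_coeff_mult nc_coeff_var nc_coeff_const nc_coeff_one pvar_def pvar_star_def
  have coeff_mult: "nc_coeff (rel_mult G F a b l) =
      fa_sub (fa_sum (\<lambda>k. fa_smul (qmul G a b k) (fa_p l k)) {..<qdim G})
        (fa_sum (\<lambda>(i, i'). fa_smul (qmul F i i' l) (fa_mul (fa_p i a) (fa_p i' b)))
          ({..<qdim F} \<times> {..<qdim F}))" for a b l
    by (simp add: rel_mult_def coeff, simp add: coeff_var)
  have coeff_unit: "nc_coeff (rel_unit G F l) =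
      fa_sub (fa_sum (\<lambda>j. fa_smul (qunit G j) (fa_p l j)) {..<qdim G}) (fa_smul (qunit F l) fa_one)" for l
    by (simp add: rel_unit_def coeff, simp add: coeff_var)
  have coeff_star: "nc_coeff (rel_star G F a l) =
      fa_sub (fa_sum (\<lambda>k. fa_smul (qstar G a k) (fa_p l k)) {..<qdim G})
        (fa_sum (\<lambda>i. fa_smul (qstar F i l) (fa_pstar i a)) {..<qdim F})" for a l
    by (simp add: rel_star_def coeff, simp add: coeff_var)
  have coeff_adj: "nc_coeff (rel_adj G F j l) =
      fa_sub (fa_sum (\<lambda>k. fa_smul (qadj G k j) (fa_p l k)) {..<qdim G})
        (fa_sum (\<lambda>i. fa_smul (qadj F l i) (fa_p i j)) {..<qdim F})" for j l
    by (simp add: rel_adj_def coeff, simp add: coeff_var)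
  have coeff_unitary_row: "nc_coeff (rel_unitary_row G F i k) =
      fa_sub (fa_sum (\<lambda>j. fa_mul (fa_p i j) (fa_pstar k j)) {..<qdim G}) (fa_smul (kdelta i k) fa_one)" for i k
    by (simp add: rel_unitary_row_def coeff, simp add: coeff_var)
  have coeff_unitary_col: "nc_coeff (rel_unitary_col G F j k) =
      fa_sub (fa_sum (\<lambda>i. fa_mul (fa_pstar i j) (fa_p i k)) {..<qdim F}) (fa_smul (kdelta j k) fa_one)" for j k
    by (simp add: rel_unitary_col_def coeff, simp add: coeff_var)
  show ?thesis
    unfolding qiso_rels_def qiso_rel_polys_def Let_def image_Un
      coeff_mult[symmetric] coeff_unit[symmetric] coeff_star[symmetric] coeff_adj[symmetric]
      coeff_unitary_row[symmetric] coeff_unitary_col[symmetric]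
    by (intro arg_cong2[where f = "(\<union>)"]; blast)
qed

lemma qiso_rel_polys_in_ideal: "x \<in> qiso_rel_polys G F \<Longrightarrow> x \<in> nc_ideal (qiso_rels G F)"
  by (rule nc_ideal_rel) (simp add: qiso_rels_eq_image)

abbreviation qiso_cong :: "qgraph \<Rightarrow> qgraph \<Rightarrow> ncpoly \<Rightarrow> ncpoly \<Rightarrow> bool" where
  "qiso_cong G F \<equiv> nc_cong (qiso_rels G F)"

lemma qiso_cong_rel: "r \<in> qiso_rel_polys G F \<Longrightarrow> r = x - y \<Longrightarrow> qiso_cong G F x y"
  unfolding nc_cong_def using qiso_rel_polys_in_ideal by blast

lemma rel_mult_eq:
  "rel_mult G F a b l = (\<Sum>k<qdim G. nc_const (qmul G a b k) * pvar l k)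
    - (\<Sum>i'<qdim F. (\<Sum>i<qdim F. nc_const (qmul F i i' l) * pvar i a) * pvar i' b)"
proof -
  have "(\<Sum>(i, i')\<in>{..<qdim F} \<times> {..<qdim F}. nc_const (qmul F i i' l) * (pvar i a * pvar i' b))
      = (\<Sum>i'<qdim F. \<Sum>i<qdim F. nc_const (qmul F i i' l) * (pvar i a * pvar i' b))"
    unfolding sum.cartesian_product[symmetric] by (rule sum.swap)
  then show ?thesis
    by (simp add: rel_mult_def sum_distrib_right mult.assoc)
qed

lemma qiso_cong_mult:
  "a < qdim G \<Longrightarrow> b < qdim G \<Longrightarrow> l < qdim F \<Longrightarrow>
    qiso_cong G F (\<Sum>k<qdim G. nc_const (qmul G a b k) * pvar l k)
      (\<Sum>i'<qdim F. (\<Sum>i<qdim F. nc_const (qmul F i i' l) * pvar i a) * pvar i' b)"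
  by (rule qiso_cong_rel[where r = "rel_mult G F _ _ _"], unfold qiso_rel_polys_def, blast)
    (rule rel_mult_eq)

lemma qiso_cong_unit:
  "l < qdim F \<Longrightarrow>
    qiso_cong G F (\<Sum>j<qdim G. nc_const (qunit G j) * pvar l j) (nc_const (qunit F l))"
  by (rule qiso_cong_rel[where r = "rel_unit G F _"], unfold qiso_rel_polys_def, blast)
    (simp add: rel_unit_def)

lemma qiso_cong_star:
  "a < qdim G \<Longrightarrow> l < qdim F \<Longrightarrow>
    qiso_cong G F (\<Sum>k<qdim G. nc_const (qstar G a k) * pvar l k)
      (\<Sum>i<qdim F. nc_const (qstar F i l) * pvar_star i a)"
  by (rule qiso_cong_rel[where r = "rel_star G F _ _"], unfold qiso_rel_polys_def, blast)
    (simp add: rel_star_def)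

lemma qiso_cong_adj:
  "j < qdim G \<Longrightarrow> l < qdim F \<Longrightarrow>
    qiso_cong G F (\<Sum>k<qdim G. nc_const (qadj G k j) * pvar l k)
      (\<Sum>i<qdim F. nc_const (qadj F l i) * pvar i j)"
  by (rule qiso_cong_rel[where r = "rel_adj G F _ _"], unfold qiso_rel_polys_def, blast)
    (simp add: rel_adj_def)

lemma qiso_cong_unitary_row:
  "i < qdim F \<Longrightarrow> k < qdim F \<Longrightarrow>
    qiso_cong G F (\<Sum>j<qdim G. pvar i j * pvar_star k j) (nc_const (kdelta i k))"
  by (rule qiso_cong_rel[where r = "rel_unitary_row G F _ _"], unfold qiso_rel_polys_def, blast)
    (simp add: rel_unitary_row_def)

lemma qiso_cong_unitary_col:
  "j < qdim G \<Longrightarrow> k < qdim G \<Longrightarrow>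
    qiso_cong G F (\<Sum>i<qdim F. pvar_star i j * pvar i k) (nc_const (kdelta j k))"
  by (rule qiso_cong_rel[where r = "rel_unitary_col G F _ _"], unfold qiso_rel_polys_def, blast)
    (simp add: rel_unitary_col_def)

section \<open>Invariants of quantum isomorphism\<close>

lemma qdim_pos: "is_qgraph G \<Longrightarrow> 0 < qdim G"
  by (rule ccontr) (simp add: is_qgraph_def is_gns_state_def vpsi_def)

lemma qdelta_pos: "is_qgraph G \<Longrightarrow> 0 < qdelta G"
  by (simp add: is_qgraph_def is_delta_form_def)

lemma qgraph_delta_form:
  "is_qgraph G \<Longrightarrow> k < qdim G \<Longrightarrow> l < qdim G \<Longrightarrow>
    (\<Sum>i<qdim G. \<Sum>j<qdim G. qmul G i j l * cnj (qmul G i j k))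
      = complex_of_real ((qdelta G)\<^sup>2) * (if k = l then 1 else 0)"
  by (simp add: is_qgraph_def is_delta_form_def)

text \<open>In an orthonormal basis, psi(e_k) = <1, e_k> because the unit is self-adjoint.\<close>

lemma qstate_eq_cnj_qunit:
  assumes G: "is_qgraph G" and k: "k < qdim G"
  shows "qstate G k = cnj (qunit G k)"
proof -
  let ?V = "vecs (qdim G)"
  have one: "vone G \<in> ?V"
    and unit_left: "\<And>x. x \<in> ?V \<Longrightarrow> vmul G (vone G) x = x"
    and unit_right: "\<And>x. x \<in> ?V \<Longrightarrow> vmul G x (vone G) = x"
    and star_star: "\<And>x. x \<in> ?V \<Longrightarrow> vstar G (vstar G x) = x"
    and star_mult: "\<And>x y. x \<in> ?V \<Longrightarrow> y \<in> ?V \<Longrightarrow>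
      vstar G (vmul G x y) = vmul G (vstar G y) (vstar G x)"
    and gns: "\<And>x y. x \<in> ?V \<Longrightarrow> y \<in> ?V \<Longrightarrow>
      vpsi G (vmul G (vstar G x) y) = vinner (qdim G) x y"
    using G unfolding is_qgraph_def is_fd_cstar_algebra_def is_gns_state_def Let_def by blast+
  have star_in: "vstar G x \<in> ?V" for x
    by (auto simp: vecs_def vstar_def)
  have "vstar G (vone G) = vmul G (vstar G (vone G)) (vone G)"
    using unit_right[OF star_in] by simp
  then have "vstar G (vstar G (vone G)) = vstar G (vmul G (vstar G (vone G)) (vone G))"
    by simp
  also have "\<dots> = vmul G (vstar G (vone G)) (vstar G (vstar G (vone G)))"
    using star_mult[OF star_in one] .
  also have "\<dots> = vstar G (vone G)"
    using star_star[OF one] unit_right[OF star_in] by simp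
  finally have star_one: "vstar G (vone G) = vone G"
    using star_star[OF one] by simp
  define e where "e = (\<lambda>i. if i = k then (1::complex) else 0)"
  have e: "e \<in> ?V" using k by (auto simp: vecs_def e_def)
  have "vpsi G e = vinner (qdim G) (vone G) e"
    using gns[OF one e] by (simp add: star_one unit_left[OF e])
  moreover have "vpsi G e = (\<Sum>i<qdim G. if i = k then qstate G i else 0)"
    unfolding vpsi_def e_def by (intro sum.cong) auto
  moreover have "vinner (qdim G) (vone G) e = (\<Sum>i<qdim G. if i = k then cnj (qunit G i) else 0)"
    unfolding vinner_def e_def vone_def by (intro sum.cong) auto
  ultimately show ?thesis using k by simp
qed

lemma sum_const_kdelta:
  "j < n \<Longrightarrow> (\<Sum>i<n. nc_const (c i) * nc_const (kdelta i j)) = nc_const (c j)"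
  by (simp add: nc_const_mult[symmetric] kdelta_def if_distrib cong: if_cong)

lemma sum_kdelta:
  assumes "j < n"
  shows "(\<Sum>i<n. X i * nc_const (kdelta j i) * Y i) = X j * Y j"
proof -
  have "(\<Sum>i<n. X i * nc_const (kdelta j i) * Y i) = (\<Sum>i<n. if j = i then X i * Y i else 0)"
    by (intro sum.cong) (auto simp: kdelta_def)
  then show ?thesis using assms by simp
qed

lemma qiso_cong_state:
  assumes G: "is_qgraph G" and F: "is_qgraph F" and j: "j < qdim G"
  shows "qiso_cong G F (\<Sum>l<qdim F. nc_const (qstate F l) * pvar l j) (nc_const (qstate G j))"
proof -
  have "(\<Sum>l<qdim F. nc_const (qstate F l) * pvar l j)
      = (\<Sum>l<qdim F. nc_star (nc_const (qunit F l)) * pvar l j)"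
    using F by (simp add: qstate_eq_cnj_qunit nc_star_const)
  also have "qiso_cong G F \<dots>
      (\<Sum>l<qdim F. nc_star (\<Sum>k<qdim G. nc_const (qunit G k) * pvar l k) * pvar l j)"
    by (intro nc_cong_sum nc_cong_mult_right nc_cong_star nc_cong_sym[OF qiso_cong_unit]) simp
  also have "\<dots> = (\<Sum>k<qdim G. nc_const (cnj (qunit G k)) * (\<Sum>l<qdim F. pvar_star l k * pvar l j))"
    by (simp add: nc_star_linear_comb sum_distrib_right sum_distrib_left mult.assoc sum.swap[of _ "{..<qdim F}"])
  also have "qiso_cong G F \<dots> (\<Sum>k<qdim G. nc_const (cnj (qunit G k)) * nc_const (kdelta k j))"
    by (intro nc_cong_sum nc_cong_mult_left qiso_cong_unitary_col) (use j in auto)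
  also have "\<dots> = nc_const (qstate G j)"
    using j G by (simp add: sum_const_kdelta qstate_eq_cnj_qunit)
  finally show ?thesis .
qed

lemma qiso_cong_row_orthogonal:
  "qiso_cong G F (\<Sum>b<qdim G. (\<Sum>i<qdim F. X i * pvar i b) * (\<Sum>j<qdim F. pvar_star j b * Y j))
    (\<Sum>i<qdim F. X i * Y i)"
proof -
  have "(\<Sum>b<qdim G. (\<Sum>i<qdim F. X i * pvar i b) * (\<Sum>j<qdim F. pvar_star j b * Y j))
      = (\<Sum>b<qdim G. \<Sum>i<qdim F. \<Sum>j<qdim F. X i * (pvar i b * pvar_star j b) * Y j)"
    by (simp add: sum_product mult.assoc)
  also have "\<dots> = (\<Sum>i<qdim F. \<Sum>j<qdim F. X i * (\<Sum>b<qdim G. pvar i b * pvar_star j b) * Y j)"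
    by (subst sum.swap, rule sum.cong[OF refl], subst sum.swap)
      (simp add: sum_distrib_left sum_distrib_right)
  also have "qiso_cong G F \<dots> (\<Sum>i<qdim F. \<Sum>j<qdim F. X i * nc_const (kdelta i j) * Y j)"
    by (intro nc_cong_sum nc_cong_mult_right nc_cong_mult_left qiso_cong_unitary_row) auto
  also have "\<dots> = (\<Sum>i<qdim F. X i * Y i)"
    by (simp add: sum_kdelta)
  finally show ?thesis .
qed

lemma sum_swap_pairs:
  "(\<Sum>a\<in>A. \<Sum>b\<in>B. \<Sum>c\<in>C. \<Sum>d\<in>D. f a b c d)
    = (\<Sum>c\<in>C. \<Sum>d\<in>D. \<Sum>a\<in>A. \<Sum>b\<in>B. f a b c d)"
proof -
  have "(\<Sum>a\<in>A. \<Sum>b\<in>B. \<Sum>c\<in>C. \<Sum>d\<in>D. f a b c d)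
      = (\<Sum>a\<in>A. \<Sum>c\<in>C. \<Sum>d\<in>D. \<Sum>b\<in>B. f a b c d)"
    by (rule sum.cong[OF refl], subst sum.swap, rule sum.cong[OF refl], rule sum.swap)
  also have "\<dots> = (\<Sum>c\<in>C. \<Sum>a\<in>A. \<Sum>d\<in>D. \<Sum>b\<in>B. f a b c d)"
    by (rule sum.swap)
  also have "\<dots> = (\<Sum>c\<in>C. \<Sum>d\<in>D. \<Sum>a\<in>A. \<Sum>b\<in>B. f a b c d)"
    by (rule sum.cong[OF refl], rule sum.swap)
  finally show ?thesis .
qed

lemma qgraph_sum_square_mult_coeffs:
  assumes G: "is_qgraph G"
  shows "(\<Sum>a<qdim G. \<Sum>b<qdim G. (\<Sum>k<qdim G. nc_const (qmul G a b k) * X k)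
            * nc_star (\<Sum>k<qdim G. nc_const (qmul G a b k) * X k))
       = nc_const (complex_of_real ((qdelta G)\<^sup>2)) * (\<Sum>k<qdim G. X k * nc_star (X k))"
    (is "?lhs = _")
proof -
  let ?N = "qdim G" and ?c = "qmul G"
  have "?lhs = (\<Sum>a<?N. \<Sum>b<?N. \<Sum>k<?N. \<Sum>k'<?N.
      nc_const (?c a b k * cnj (?c a b k')) * (X k * nc_star (X k')))"
    by (simp add: nc_star_linear_comb sum_product nc_const_mult_mult)
  also have "\<dots> = (\<Sum>k<?N. \<Sum>k'<?N. nc_const (\<Sum>a<?N. \<Sum>b<?N. ?c a b k * cnj (?c a b k'))
      * (X k * nc_star (X k')))"
    by (subst sum_swap_pairs) (simp add: nc_const_sum sum_distrib_right)
  also have "\<dots> = (\<Sum>k<?N. \<Sum>k'<?N. if k' = k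
      then nc_const (complex_of_real ((qdelta G)\<^sup>2)) * (X k * nc_star (X k')) else 0)"
    using qgraph_delta_form[OF G] by (intro sum.cong refl) simp
  also have "\<dots> = nc_const (complex_of_real ((qdelta G)\<^sup>2)) * (\<Sum>k<?N. X k * nc_star (X k))"
    by (simp add: sum_distrib_left)
  finally show ?thesis .
qed

text \<open>Both sides are the image of (m m^*)(e_0) under the isomorphism: computing it through the
  multiplicativity relation and unitarity of P in the two possible orders yields the two values of
  delta^2.\<close>

lemma qiso_cong_qdelta_square:
  assumes G: "is_qgraph G" and F: "is_qgraph F"
  shows "qiso_cong G F (nc_const (complex_of_real ((qdelta G)\<^sup>2)))
    (nc_const (complex_of_real ((qdelta F)\<^sup>2)))"
proof -
  have F0: "0 < qdim F" using F by (rule qdim_pos)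
  define L where "L a b = (\<Sum>k<qdim G. nc_const (qmul G a b k) * pvar 0 k)" for a b
  define A where "A i' a = (\<Sum>i<qdim F. nc_const (qmul F i i' 0) * pvar i a)" for i' a
  define S where "S = (\<Sum>a<qdim G. \<Sum>b<qdim G. L a b * nc_star (L a b))"
  have "S = nc_const (complex_of_real ((qdelta G)\<^sup>2)) * (\<Sum>k<qdim G. pvar 0 k * pvar_star 0 k)"
    unfolding S_def L_def by (simp add: qgraph_sum_square_mult_coeffs[OF G])
  also have "qiso_cong G F \<dots> (nc_const (complex_of_real ((qdelta G)\<^sup>2)) * nc_const (kdelta 0 0))"
    by (intro nc_cong_mult_left qiso_cong_unitary_row F0)
  finally have SG: "qiso_cong G F S (nc_const (complex_of_real ((qdelta G)\<^sup>2)))"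
    by (simp add: kdelta_def)
  have "qiso_cong G F S (\<Sum>a<qdim G. \<Sum>b<qdim G.
      (\<Sum>i'<qdim F. A i' a * pvar i' b) * (\<Sum>j'<qdim F. pvar_star j' b * nc_star (A j' a)))"
    unfolding S_def
  proof (intro nc_cong_sum nc_cong_mult)
    fix a b assume "a \<in> {..<qdim G}" "b \<in> {..<qdim G}"
    then have "qiso_cong G F (L a b) (\<Sum>i'<qdim F. A i' a * pvar i' b)"
      unfolding L_def A_def using F0 by (intro qiso_cong_mult) auto
    moreover have "nc_star (\<Sum>i'<qdim F. A i' a * pvar i' b)
        = (\<Sum>j'<qdim F. pvar_star j' b * nc_star (A j' a))"
      by (simp add: nc_star_sum nc_star_mult)
    ultimately show "qiso_cong G F (L a b) (\<Sum>i'<qdim F. A i' a * pvar i' b)"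
      and "qiso_cong G F (nc_star (L a b)) (\<Sum>j'<qdim F. pvar_star j' b * nc_star (A j' a))"
      using nc_cong_star by metis+
  qed
  also have "qiso_cong G F \<dots> (\<Sum>a<qdim G. \<Sum>i'<qdim F. A i' a * nc_star (A i' a))"
    by (intro nc_cong_sum qiso_cong_row_orthogonal)
  also have "\<dots> = (\<Sum>i'<qdim F. \<Sum>a<qdim G. (\<Sum>i<qdim F. nc_const (qmul F i i' 0) * pvar i a)
      * (\<Sum>j<qdim F. pvar_star j a * nc_const (cnj (qmul F j i' 0))))"
    by (subst sum.swap) (simp add: A_def nc_star_sum nc_star_mult nc_star_const)
  also have "qiso_cong G F \<dots> (\<Sum>i'<qdim F. \<Sum>i<qdim F. nc_const (qmul F i i' 0) * nc_const (cnj (qmul F i i' 0)))"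
    by (intro nc_cong_sum qiso_cong_row_orthogonal)
  also have "\<dots> = nc_const (\<Sum>i<qdim F. \<Sum>i'<qdim F. qmul F i i' 0 * cnj (qmul F i i' 0))"
    by (subst sum.swap) (simp add: nc_const_sum nc_const_mult)
  also have "\<dots> = nc_const (complex_of_real ((qdelta F)\<^sup>2))"
    using qgraph_delta_form[OF F F0 F0] by simp
  finally show ?thesis
    using SG by (meson nc_cong_sym nc_cong_trans)
qed

lemma quantum_iso_qdelta_eq:
  assumes G: "is_qgraph G" and F: "is_qgraph F" and iso: "quantum_iso G F"
  shows "qdelta G = qdelta F"
proof -
  have "nc_const (complex_of_real ((qdelta G)\<^sup>2) - complex_of_real ((qdelta F)\<^sup>2))
      \<in> nc_ideal (qiso_rels G F)"
    using qiso_cong_qdelta_square[OF G F] by (simp add: nc_cong_def nc_const_diff)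
  then have "complex_of_real ((qdelta G)\<^sup>2) = complex_of_real ((qdelta F)\<^sup>2)"
    using iso by (simp only: nc_ideal_const_iff quantum_iso_iff) simp
  then have "(qdelta G)\<^sup>2 = (qdelta F)\<^sup>2"
    by (simp only: of_real_eq_iff)
  then show ?thesis
    using qdelta_pos[OF G] qdelta_pos[OF F] by (simp add: power2_eq_iff_nonneg)
qed

section \<open>The Mycielskian construction\<close>

text \<open>myc_index N s j is the coordinate of e_j in the s-th copy of C(G), 1 \<le> s \<le> r;
  coordinate 0 is the extra summand \<complex>.\<close>

definition myc_index :: "nat \<Rightarrow> nat \<Rightarrow> nat \<Rightarrow> nat" where
  "myc_index N s j = Suc ((s - 1) * N + j)"

lemma myc_index_nonzero [simp]:
  "myc_index N s j \<noteq> 0" "0 \<noteq> myc_index N s j" "1 \<le> myc_index N s j" "Suc 0 \<le> myc_index N s j"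
  "0 < myc_index N s j"
  by (auto simp: myc_index_def)

lemma myc_slot_index [simp]: "1 \<le> s \<Longrightarrow> j < N \<Longrightarrow> myc_slot N (myc_index N s j) = s"
  by (simp add: myc_index_def myc_slot_def)

lemma myc_pos_index [simp]: "j < N \<Longrightarrow> myc_pos N (myc_index N s j) = j"
  by (simp add: myc_index_def myc_pos_def)

lemma myc_index_eq_iff:
  "1 \<le> s \<Longrightarrow> 1 \<le> s' \<Longrightarrow> j < N \<Longrightarrow> j' < N \<Longrightarrow>
    myc_index N s j = myc_index N s' j' \<longleftrightarrow> s = s' \<and> j = j'"
  by (metis myc_slot_index myc_pos_index)

lemma myc_index_less: "1 \<le> s \<Longrightarrow> s \<le> r \<Longrightarrow> j < N \<Longrightarrow> myc_index N s j < 1 + r * N"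
proof -
  assume s: "1 \<le> s" "s \<le> r" and j: "j < N"
  have "(s - 1) * N + j < s * N"
    using s j by (cases s) auto
  also have "\<dots> \<le> r * N"
    using s by simp
  finally show ?thesis by (simp add: myc_index_def)
qed

lemma myc_index_cases:
  assumes "t < 1 + r * N" "0 < N"
  obtains (zero) "t = 0" | (block) s j where "s \<in> {1..r}" "j < N" "t = myc_index N s j"
proof (cases "t = 0")
  case False
  have "t - 1 < r * N"
    using assms False by simp
  then have "(t - 1) div N < r"
    by (rule less_mult_imp_div_less)
  then have "myc_slot N t \<in> {1..r}" and "myc_pos N t < N"
    using assms by (simp_all add: myc_slot_def myc_pos_def)
  moreover have "t = myc_index N (myc_slot N t) (myc_pos N t)"
    using False by (simp add: myc_index_def myc_slot_def myc_pos_def)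
  ultimately show ?thesis by (rule block)
qed (rule zero)

lemma sum_myc_indices:
  assumes "0 < N"
  shows "(\<Sum>t<1 + r * N. h t) = h 0 + (\<Sum>s\<in>{1..r}. \<Sum>j<N. h (myc_index N s j))"
proof -
  let ?idx = "\<lambda>(s, j). myc_index N s j"
  have decomp: "{..<1 + r * N} = insert 0 (?idx ` ({1..r} \<times> {..<N}))"
  proof
    show "{..<1 + r * N} \<subseteq> insert 0 (?idx ` ({1..r} \<times> {..<N}))"
    proof
      fix t assume "t \<in> {..<1 + r * N}"
      then have "t < 1 + r * N" by simp
      then show "t \<in> insert 0 (?idx ` ({1..r} \<times> {..<N}))"
        by (rule myc_index_cases[OF _ assms]) force+
    qed
  qed (auto intro: myc_index_less[simplified])
  have "inj_on ?idx ({1..r} \<times> {..<N})"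
    by (auto simp: inj_on_def myc_index_eq_iff)
  then have "(\<Sum>t\<in>?idx ` ({1..r} \<times> {..<N}). h t) = (\<Sum>s\<in>{1..r}. \<Sum>j<N. h (myc_index N s j))"
    by (simp add: sum.reindex split_def sum.cartesian_product)
  then show ?thesis
    unfolding decomp by (subst sum.insert) auto
qed

context
  fixes r :: nat and H :: qgraph
  assumes r: "2 \<le> r"
begin

lemma qdim_mycielskian: "qdim (mycielskian r H) = 1 + r * qdim H"
  using r unfolding mycielskian_def Let_def by simp

lemma qmul_mycielskian:
  "qmul (mycielskian r H) t1 t2 t3 =
    (if t1 = 0 \<and> t2 = 0 \<and> t3 = 0 then complex_of_real (sqrt (1 + real r * (qdelta H)\<^sup>2))
     else if 1 \<le> t1 \<and> 1 \<le> t2 \<and> 1 \<le> t3 \<and> myc_slot (qdim H) t1 = myc_slot (qdim H) t2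
       \<and> myc_slot (qdim H) t2 = myc_slot (qdim H) t3
     then complex_of_real (sqrt (1 + real r * (qdelta H)\<^sup>2) / qdelta H)
       * qmul H (myc_pos (qdim H) t1) (myc_pos (qdim H) t2) (myc_pos (qdim H) t3)
     else 0)"
  using r unfolding mycielskian_def Let_def by simp

lemma qstar_mycielskian:
  "qstar (mycielskian r H) t1 t2 =
    (if t1 = 0 \<and> t2 = 0 then 1
     else if 1 \<le> t1 \<and> 1 \<le> t2 \<and> myc_slot (qdim H) t1 = myc_slot (qdim H) t2
     then qstar H (myc_pos (qdim H) t1) (myc_pos (qdim H) t2)
     else 0)"
  using r unfolding mycielskian_def Let_def by simp

lemma qunit_mycielskian:
  "qunit (mycielskian r H) t =
    (if t = 0 then complex_of_real (1 / sqrt (1 + real r * (qdelta H)\<^sup>2))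
     else complex_of_real (qdelta H / sqrt (1 + real r * (qdelta H)\<^sup>2)) * qunit H (myc_pos (qdim H) t))"
  using r unfolding mycielskian_def Let_def by simp

lemma qadj_mycielskian:
  "qadj (mycielskian r H) t1 t2 =
    (if t1 = 0 \<and> t2 = 0 then 0
     else if t1 = 0 then
       (if myc_slot (qdim H) t2 = r then complex_of_real (qdelta H) * qstate H (myc_pos (qdim H) t2) else 0)
     else if t2 = 0 then
       (if myc_slot (qdim H) t1 = r then complex_of_real (qdelta H) * qunit H (myc_pos (qdim H) t1) else 0)
     else if myc_feeds r (myc_slot (qdim H) t2) (myc_slot (qdim H) t1)
     then qadj H (myc_pos (qdim H) t1) (myc_pos (qdim H) t2)
     else 0)"
  using r unfolding mycielskian_def Let_def by simp

end

text \<open>The image of the quantum isomorphism matrix: P' = 1 \<oplus> (I_r \<otimes> P), one copy of P per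
  copy of C(G).\<close>

definition block_img :: "nat \<Rightarrow> nat \<Rightarrow> nat \<Rightarrow> nat \<Rightarrow> bool \<Rightarrow> ncpoly" where
  "block_img M N t u b =
    (if t = 0 \<and> u = 0 then 1
     else if t \<noteq> 0 \<and> u \<noteq> 0 \<and> myc_slot M t = myc_slot N u then nc_var (myc_pos M t, myc_pos N u, b)
     else 0)"

definition block_gen_img :: "nat \<Rightarrow> nat \<Rightarrow> gen \<Rightarrow> ncpoly" where
  "block_gen_img M N g = (case g of (t, u, b) \<Rightarrow> block_img M N t u b)"

lemma block_gen_img_flip: "block_gen_img M N (gen_flip g) = nc_star (block_gen_img M N g)"
  by (cases g) (auto simp: block_gen_img_def block_img_def gen_flip_def nc_star_var)

lemma block_img_zero_zero [simp]: "block_img M N 0 0 b = 1"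
  by (simp add: block_img_def)

lemma block_img_zero_index [simp]: "block_img M N 0 (myc_index N s j) b = 0"
  by (simp add: block_img_def)

lemma block_img_index_zero [simp]: "block_img M N (myc_index M s j) 0 b = 0"
  by (simp add: block_img_def)

lemma block_img_index_index [simp]:
  "1 \<le> s \<Longrightarrow> 1 \<le> s' \<Longrightarrow> i < M \<Longrightarrow> j < N \<Longrightarrow>
    block_img M N (myc_index M s i) (myc_index N s' j) b = (if s = s' then nc_var (i, j, b) else 0)"
  by (simp add: block_img_def)

lemma nc_eval_block_pvar: "nc_eval (block_gen_img M N) (pvar t u) = block_img M N t u False"
  by (simp add: pvar_def block_gen_img_def)

lemma nc_eval_block_pvar_star: "nc_eval (block_gen_img M N) (pvar_star t u) = block_img M N t u True"
  by (simp add: pvar_star_def block_gen_img_def)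

lemma nc_var_eq_pvar: "nc_var (i, j, False) = pvar i j" "nc_var (i, j, True) = pvar_star i j"
  by (simp_all add: pvar_def pvar_star_def)

context
  fixes M N r :: nat
  assumes M: "0 < M" and N: "0 < N"
begin

lemma sum_block_row_zero: "(\<Sum>k<1 + r * N. X k * block_img M N 0 k b * Y k) = X 0 * Y 0"
  unfolding sum_myc_indices[OF N] by simp

lemma sum_block_col_zero: "(\<Sum>i<1 + r * M. X i * block_img M N i 0 b * Y i) = X 0 * Y 0"
  unfolding sum_myc_indices[OF M] by simp

lemma sum_block_row:
  assumes s: "s \<in> {1..r}" and l: "l < M"
  shows "(\<Sum>k<1 + r * N. X k * block_img M N (myc_index M s l) k b * Y k)
    = (\<Sum>k<N. X (myc_index N s k) * nc_var (l, k, b) * Y (myc_index N s k))"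
proof -
  have "(\<Sum>k<1 + r * N. X k * block_img M N (myc_index M s l) k b * Y k)
      = (\<Sum>s'\<in>{1..r}. if s = s' then \<Sum>k<N. X (myc_index N s' k) * nc_var (l, k, b) * Y (myc_index N s' k) else 0)"
    unfolding sum_myc_indices[OF N] block_img_index_zero mult_zero_right mult_zero_left add_0
    using s l by (intro sum.cong) auto
  also have "\<dots> = (\<Sum>k<N. X (myc_index N s k) * nc_var (l, k, b) * Y (myc_index N s k))"
    using s by simp
  finally show ?thesis .
qed

lemma sum_block_col:
  assumes s: "s \<in> {1..r}" and j: "j < N"
  shows "(\<Sum>i<1 + r * M. X i * block_img M N i (myc_index N s j) b * Y i)
    = (\<Sum>i<M. X (myc_index M s i) * nc_var (i, j, b) * Y (myc_index M s i))"
proof -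
  have "(\<Sum>i<1 + r * M. X i * block_img M N i (myc_index N s j) b * Y i)
      = (\<Sum>s'\<in>{1..r}. if s' = s then \<Sum>i<M. X (myc_index M s' i) * nc_var (i, j, b) * Y (myc_index M s' i) else 0)"
    unfolding sum_myc_indices[OF M] block_img_zero_index mult_zero_right mult_zero_left add_0
    using s j by (intro sum.cong) auto
  also have "\<dots> = (\<Sum>i<M. X (myc_index M s i) * nc_var (i, j, b) * Y (myc_index M s i))"
    using s by simp
  finally show ?thesis .
qed

lemmas sum_block_simps =
  sum_block_row_zero[where Y = "\<lambda>_. 1", unfolded mult_1_right]
  sum_block_row_zero[where X = "\<lambda>_. 1", unfolded mult_1_left]
  sum_block_col_zero[where Y = "\<lambda>_. 1", unfolded mult_1_right]
  sum_block_col_zero[where X = "\<lambda>_. 1", unfolded mult_1_left]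
  sum_block_row[where Y = "\<lambda>_. 1", unfolded mult_1_right]
  sum_block_row[where X = "\<lambda>_. 1", unfolded mult_1_left]
  sum_block_col[where Y = "\<lambda>_. 1", unfolded mult_1_right]
  sum_block_col[where X = "\<lambda>_. 1", unfolded mult_1_left]

end

context
  fixes r :: nat and G F :: qgraph
  assumes G: "is_qgraph G" and F: "is_qgraph F" and iso: "quantum_iso G F" and r: "2 \<le> r"
begin

lemma G_dim_pos: "0 < qdim G"
  using G by (rule qdim_pos)

lemma F_dim_pos: "0 < qdim F"
  using F by (rule qdim_pos)

lemma G_index_cases [consumes 1, case_names zero block]:
  assumes "t < 1 + r * qdim G"
  obtains "t = 0" | s j where "s \<in> {1..r}" "j < qdim G" "t = myc_index (qdim G) s j"
  using myc_index_cases[OF assms G_dim_pos] by blast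

lemma F_index_cases [consumes 1, case_names zero block]:
  assumes "t < 1 + r * qdim F"
  obtains "t = 0" | s j where "s \<in> {1..r}" "j < qdim F" "t = myc_index (qdim F) s j"
  using myc_index_cases[OF assms F_dim_pos] by blast

lemmas block_sums = sum_block_simps[OF F_dim_pos G_dim_pos]

lemmas myc_simps = qdim_mycielskian[OF r] qmul_mycielskian[OF r] qstar_mycielskian[OF r]
  qunit_mycielskian[OF r] qadj_mycielskian[OF r] quantum_iso_qdelta_eq[OF G F iso, symmetric]

lemmas factor_const = sum_distrib_left mult.assoc[symmetric] nc_const_mult[symmetric]

abbreviation pblock :: "nat \<Rightarrow> nat \<Rightarrow> bool \<Rightarrow> ncpoly" where
  "pblock \<equiv> block_img (qdim F) (qdim G)"

abbreviation block_hom :: "ncpoly \<Rightarrow> ncpoly" where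
  "block_hom \<equiv> nc_eval (block_gen_img (qdim F) (qdim G))"

lemma block_hom_rel_unit:
  assumes l: "l < 1 + r * qdim F"
  shows "block_hom (rel_unit (mycielskian r G) (mycielskian r F) l) \<in> nc_ideal (qiso_rels G F)"
proof -
  have img: "block_hom (rel_unit (mycielskian r G) (mycielskian r F) l)
      = (\<Sum>j<1 + r * qdim G. nc_const (qunit (mycielskian r G) j) * pblock l j False)
      - nc_const (qunit (mycielskian r F) l)"
    by (simp only: rel_unit_def nc_eval_diff nc_eval_sum nc_eval_const_mult nc_eval_block_pvar
      nc_eval_const qdim_mycielskian[OF r])
  from l show ?thesis
  proof (cases rule: F_index_cases)
    case zero
    then show ?thesis
      unfolding img unfolding zero by (simp only: block_sums) (simp add: myc_simps)
  next
    case (block s l0)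
    let ?c = "complex_of_real (qdelta G / sqrt (1 + real r * (qdelta G)\<^sup>2))"
    have "qiso_cong G F (nc_const ?c * (\<Sum>j<qdim G. nc_const (qunit G j) * pvar l0 j))
        (nc_const ?c * nc_const (qunit F l0))"
      by (intro nc_cong_mult_left qiso_cong_unit) (use block in simp)
    then show ?thesis
      unfolding img unfolding block(3) using block
      by (simp only: block_sums) (simp add: myc_simps nc_var_eq_pvar nc_cong_def factor_const)
  qed
qed

lemma block_hom_rel_star:
  assumes a: "a < 1 + r * qdim G" and l: "l < 1 + r * qdim F"
  shows "block_hom (rel_star (mycielskian r G) (mycielskian r F) a l) \<in> nc_ideal (qiso_rels G F)"
proof -
  have img: "block_hom (rel_star (mycielskian r G) (mycielskian r F) a l)
      = (\<Sum>k<1 + r * qdim G. nc_const (qstar (mycielskian r G) a k) * pblock l k False)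
      - (\<Sum>i<1 + r * qdim F. nc_const (qstar (mycielskian r F) i l) * pblock i a True)"
    by (simp only: rel_star_def nc_eval_diff nc_eval_sum nc_eval_const_mult nc_eval_block_pvar
      nc_eval_block_pvar_star qdim_mycielskian[OF r])
  from a show ?thesis
  proof (cases rule: G_index_cases)
    case a_zero: zero
    from l show ?thesis
    proof (cases rule: F_index_cases)
      case zero
      then show ?thesis
        unfolding img unfolding a_zero zero by (simp only: block_sums) (simp add: myc_simps)
    next
      case (block s l0)
      then show ?thesis
        unfolding img unfolding a_zero block(3) by (simp only: block_sums) (simp add: myc_simps)
    qed
  next
    case a_block: (block s1 a0)
    from l show ?thesis
    proof (cases rule: F_index_cases)
      case zero
      then show ?thesis
        unfolding img unfolding a_block(3) zero using a_block
        by (simp only: block_sums) (simp add: myc_simps)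
    next
      case (block s l0)
      show ?thesis
      proof (cases "s1 = s")
        case True
        have "qiso_cong G F (\<Sum>k<qdim G. nc_const (qstar G a0 k) * pvar l0 k)
            (\<Sum>i<qdim F. nc_const (qstar F i l0) * pvar_star i a0)"
          by (rule qiso_cong_star) (use a_block block in auto)
        then show ?thesis
          unfolding img unfolding a_block(3) block(3) using a_block block True
          by (simp only: block_sums) (simp add: myc_simps nc_var_eq_pvar nc_cong_def)
      next
        case False
        then show ?thesis
          unfolding img unfolding a_block(3) block(3) using a_block block
          by (simp only: block_sums) (simp add: myc_simps)
      qed
    qed
  qed
qed

lemma block_hom_rel_adj:
  assumes j: "j < 1 + r * qdim G" and l: "l < 1 + r * qdim F"
  shows "block_hom (rel_adj (mycielskian r G) (mycielskian r F) j l) \<in> nc_ideal (qiso_rels G F)"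
proof -
  have img: "block_hom (rel_adj (mycielskian r G) (mycielskian r F) j l)
      = (\<Sum>k<1 + r * qdim G. nc_const (qadj (mycielskian r G) k j) * pblock l k False)
      - (\<Sum>i<1 + r * qdim F. nc_const (qadj (mycielskian r F) l i) * pblock i j False)"
    by (simp only: rel_adj_def nc_eval_diff nc_eval_sum nc_eval_const_mult nc_eval_block_pvar
      qdim_mycielskian[OF r])
  let ?d = "complex_of_real (qdelta G)"
  from j show ?thesis
  proof (cases rule: G_index_cases)
    case j_zero: zero
    from l show ?thesis
    proof (cases rule: F_index_cases)
      case zero
      then show ?thesis
        unfolding img unfolding j_zero zero by (simp only: block_sums) (simp add: myc_simps)
    next
      case (block s l0)
      have "qiso_cong G F (nc_const ?d * (\<Sum>k<qdim G. nc_const (qunit G k) * pvar l0 k))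
          (nc_const ?d * nc_const (qunit F l0))"
        by (intro nc_cong_mult_left qiso_cong_unit) (use block in auto)
      then show ?thesis
        unfolding img unfolding j_zero block(3) using block
        by (simp only: block_sums) (simp add: myc_simps nc_var_eq_pvar nc_cong_def factor_const)
    qed
  next
    case j_block: (block s1 j0)
    from l show ?thesis
    proof (cases rule: F_index_cases)
      case zero
      have "qiso_cong G F (nc_const ?d * nc_const (qstate G j0))
          (nc_const ?d * (\<Sum>l<qdim F. nc_const (qstate F l) * pvar l j0))"
        by (intro nc_cong_mult_left nc_cong_sym[OF qiso_cong_state[OF G F]]) (use j_block in auto)
      then show ?thesis
        unfolding img unfolding j_block(3) zero using j_block
        by (simp only: block_sums) (simp add: myc_simps nc_var_eq_pvar nc_cong_def factor_const)
    next
      case (block s l0)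
      show ?thesis
      proof (cases "myc_feeds r s1 s")
        case True
        have "qiso_cong G F (\<Sum>k<qdim G. nc_const (qadj G k j0) * pvar l0 k)
            (\<Sum>i<qdim F. nc_const (qadj F l0 i) * pvar i j0)"
          by (rule qiso_cong_adj) (use j_block block in auto)
        then show ?thesis
          unfolding img unfolding j_block(3) block(3) using j_block block True
          by (simp only: block_sums) (simp add: myc_simps nc_var_eq_pvar nc_cong_def)
      next
        case False
        then show ?thesis
          unfolding img unfolding j_block(3) block(3) using j_block block
          by (simp only: block_sums) (simp add: myc_simps)
      qed
    qed
  qed
qed

lemma block_hom_rel_unitary_row:
  assumes i: "i < 1 + r * qdim F" and k: "k < 1 + r * qdim F"
  shows "block_hom (rel_unitary_row (mycielskian r G) (mycielskian r F) i k) \<in> nc_ideal (qiso_rels G F)"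
proof -
  have img: "block_hom (rel_unitary_row (mycielskian r G) (mycielskian r F) i k)
      = (\<Sum>j<1 + r * qdim G. pblock i j False * pblock k j True) - nc_const (kdelta i k)"
    by (simp only: rel_unitary_row_def nc_eval_diff nc_eval_sum nc_eval_mult nc_eval_block_pvar
      nc_eval_block_pvar_star nc_eval_const qdim_mycielskian[OF r])
  from i show ?thesis
  proof (cases rule: F_index_cases)
    case i_zero: zero
    from k show ?thesis
    proof (cases rule: F_index_cases)
      case zero
      then show ?thesis
        unfolding img unfolding i_zero zero by (simp only: block_sums) (simp add: kdelta_def)
    next
      case (block s k0)
      then show ?thesis
        unfolding img unfolding i_zero block(3) by (simp only: block_sums) (simp add: kdelta_def)
    qed
  next
    case i_block: (block s1 i0)
    from k show ?thesis
    proof (cases rule: F_index_cases)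
      case zero
      then show ?thesis
        unfolding img unfolding i_block(3) zero using i_block
        by (simp only: block_sums) (simp add: kdelta_def)
    next
      case (block s k0)
      show ?thesis
      proof (cases "s1 = s")
        case True
        have "qiso_cong G F (\<Sum>j<qdim G. pvar i0 j * pvar_star k0 j) (nc_const (kdelta i0 k0))"
          by (rule qiso_cong_unitary_row) (use i_block block in auto)
        then show ?thesis
          unfolding img unfolding i_block(3) block(3) using i_block block True
          by (simp only: block_sums) (simp add: nc_var_eq_pvar nc_cong_def kdelta_def myc_index_eq_iff)
      next
        case False
        then show ?thesis
          unfolding img unfolding i_block(3) block(3) using i_block block
          by (simp only: block_sums) (simp add: kdelta_def myc_index_eq_iff)
      qed
    qed
  qed
qed

lemma block_hom_rel_unitary_col:
  assumes j: "j < 1 + r * qdim G" and k: "k < 1 + r * qdim G"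
  shows "block_hom (rel_unitary_col (mycielskian r G) (mycielskian r F) j k) \<in> nc_ideal (qiso_rels G F)"
proof -
  have img: "block_hom (rel_unitary_col (mycielskian r G) (mycielskian r F) j k)
      = (\<Sum>i<1 + r * qdim F. pblock i j True * pblock i k False) - nc_const (kdelta j k)"
    by (simp only: rel_unitary_col_def nc_eval_diff nc_eval_sum nc_eval_mult nc_eval_block_pvar
      nc_eval_block_pvar_star nc_eval_const qdim_mycielskian[OF r])
  from j show ?thesis
  proof (cases rule: G_index_cases)
    case j_zero: zero
    from k show ?thesis
    proof (cases rule: G_index_cases)
      case zero
      then show ?thesis
        unfolding img unfolding j_zero zero by (simp only: block_sums) (simp add: kdelta_def)
    next
      case (block s k0)
      then show ?thesis
        unfolding img unfolding j_zero block(3) by (simp only: block_sums) (simp add: kdelta_def)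
    qed
  next
    case j_block: (block s1 j0)
    from k show ?thesis
    proof (cases rule: G_index_cases)
      case zero
      then show ?thesis
        unfolding img unfolding j_block(3) zero using j_block
        by (simp only: block_sums) (simp add: kdelta_def)
    next
      case (block s k0)
      show ?thesis
      proof (cases "s1 = s")
        case True
        have "qiso_cong G F (\<Sum>i<qdim F. pvar_star i j0 * pvar i k0) (nc_const (kdelta j0 k0))"
          by (rule qiso_cong_unitary_col) (use j_block block in auto)
        then show ?thesis
          unfolding img unfolding j_block(3) block(3) using j_block block True
          by (simp only: block_sums) (simp add: nc_var_eq_pvar nc_cong_def kdelta_def myc_index_eq_iff)
      next
        case False
        then show ?thesis
          unfolding img unfolding j_block(3) block(3) using j_block block
          by (simp only: block_sums) (simp add: kdelta_def myc_index_eq_iff)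
      qed
    qed
  qed
qed

lemma block_hom_rel_mult:
  assumes a: "a < 1 + r * qdim G" and b: "b < 1 + r * qdim G" and l: "l < 1 + r * qdim F"
  shows "block_hom (rel_mult (mycielskian r G) (mycielskian r F) a b l) \<in> nc_ideal (qiso_rels G F)"
proof -
  have img: "block_hom (rel_mult (mycielskian r G) (mycielskian r F) a b l)
      = (\<Sum>k<1 + r * qdim G. nc_const (qmul (mycielskian r G) a b k) * pblock l k False)
      - (\<Sum>i'<1 + r * qdim F.
          (\<Sum>i<1 + r * qdim F. nc_const (qmul (mycielskian r F) i i' l) * pblock i a False)
          * pblock i' b False)"
    by (simp only: rel_mult_eq nc_eval_diff nc_eval_sum nc_eval_mult nc_eval_const nc_eval_block_pvar
      qdim_mycielskian[OF r])
  from a show ?thesis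
  proof (cases rule: G_index_cases)
    case a_zero: zero
    from b show ?thesis
    proof (cases rule: G_index_cases)
      case b_zero: zero
      from l show ?thesis
      proof (cases rule: F_index_cases)
        case zero
        then show ?thesis
          unfolding img unfolding a_zero b_zero zero by (simp only: block_sums) (simp add: myc_simps)
      next
        case (block s l0)
        then show ?thesis
          unfolding img unfolding a_zero b_zero block(3)
          by (simp only: block_sums) (simp add: myc_simps)
      qed
    next
      case b_block: (block s2 b0)
      from l show ?thesis
      proof (cases rule: F_index_cases)
        case zero
        then show ?thesis
          unfolding img unfolding a_zero b_block(3) zero using b_block
          by (simp only: block_sums) (simp add: myc_simps)
      next
        case (block s l0)
        then show ?thesis
          unfolding img unfolding a_zero b_block(3) block(3) using b_block
          by (simp only: block_sums) (simp add: myc_simps)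
      qed
    qed
  next
    case a_block: (block s1 a0)
    from b show ?thesis
    proof (cases rule: G_index_cases)
      case b_zero: zero
      from l show ?thesis
      proof (cases rule: F_index_cases)
        case zero
        then show ?thesis
          unfolding img unfolding a_block(3) b_zero zero using a_block
          by (simp only: block_sums) (simp add: myc_simps)
      next
        case (block s l0)
        then show ?thesis
          unfolding img unfolding a_block(3) b_zero block(3) using a_block
          by (simp only: block_sums) (simp add: myc_simps)
      qed
    next
      case b_block: (block s2 b0)
      from l show ?thesis
      proof (cases rule: F_index_cases)
        case zero
        then show ?thesis
          unfolding img unfolding a_block(3) b_block(3) zero using a_block b_block
          by (simp only: block_sums) (simp add: myc_simps)
      next
        case (block s l0)
        show ?thesis
        proof (cases "s1 = s2 \<and> s2 = s")
          case True
          let ?c = "complex_of_real (sqrt (1 + real r * (qdelta G)\<^sup>2) / qdelta G)"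
          have "qiso_cong G F (nc_const ?c * (\<Sum>k<qdim G. nc_const (qmul G a0 b0 k) * pvar l0 k))
              (nc_const ?c * (\<Sum>i'<qdim F. (\<Sum>i<qdim F. nc_const (qmul F i i' l0) * pvar i a0) * pvar i' b0))"
            by (intro nc_cong_mult_left qiso_cong_mult) (use a_block b_block block in auto)
          then show ?thesis
            unfolding img unfolding a_block(3) b_block(3) block(3) using a_block b_block block True
            by (simp only: block_sums) (simp add: myc_simps nc_var_eq_pvar nc_cong_def factor_const)
        next
          case False
          then show ?thesis
            unfolding img unfolding a_block(3) b_block(3) block(3) using a_block b_block block
            by (simp only: block_sums) (auto simp: myc_simps)
        qed
      qed
    qed
  qed
qed

lemma block_hom_qiso_rel_polys:
  assumes "x \<in> qiso_rel_polys (mycielskian r G) (mycielskian r F)"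
  shows "block_hom x \<in> nc_ideal (qiso_rels G F)"
  using assms unfolding qiso_rel_polys_def qdim_mycielskian[OF r]
  by (elim UnE CollectE exE conjE; simp only: block_hom_rel_mult block_hom_rel_unit block_hom_rel_star
    block_hom_rel_adj block_hom_rel_unitary_row block_hom_rel_unitary_col)

lemma quantum_iso_mycielskian: "quantum_iso (mycielskian r G) (mycielskian r F)"
proof -
  have "block_hom x \<in> nc_ideal (qiso_rels G F)"
    if "x \<in> nc_ideal (qiso_rels (mycielskian r G) (mycielskian r F))" for x
  proof (rule nc_eval_maps_ideal[where \<phi> = "block_gen_img (qdim F) (qdim G)", OF block_gen_img_flip _ that])
    fix f assume "f \<in> qiso_rels (mycielskian r G) (mycielskian r F)"
    then obtain y where "y \<in> qiso_rel_polys (mycielskian r G) (mycielskian r F)" "f = nc_coeff y"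
      unfolding qiso_rels_eq_image by blast
    then show "\<exists>y. f = nc_coeff y \<and> block_hom y \<in> nc_ideal (qiso_rels G F)"
      using block_hom_qiso_rel_polys by blast
  qed
  from this[of 1] iso show ?thesis
    unfolding quantum_iso_iff by (metis nc_eval_one)
qed

end

theorem mainTheorem2:
  fixes G F :: qgraph and r :: nat
  assumes "is_qgraph G" and "is_qgraph F" and "quantum_iso G F" and "1 \<le> r"
  shows "quantum_iso (mycielskian r G) (mycielskian r F)"
proof (cases "r = 1")
  case True
  then show ?thesis
    using assms by (simp add: mycielskian_def)
next
  case False
  then show ?thesis
    using assms quantum_iso_mycielskian[OF assms(1-3)] by simp
qed

end
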